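(* Let $R$ be a discrete valuation ring of characteristic $p>0$ with field of fractions $K$. Let $H$ be a primitively generated $K$-Hopf algebra of rank $p^n$, let $t_1,\dots,t_n$ be a $K$-basis of $\mathrm{Prim}(H)$, and suppose the associated matrix $B=(b_{j,i})$ (defined by $t_i^p=\sum_j b_{j,i}t_j$) lies in $M_n(R)$. Let $A=(a_{j,i})\in M_n(R)$ and suppose there exists $\Theta=(\theta_{j,i})\in\mathrm{GL}_n(K)$ with $\Theta A=B\Theta^{(p)}$, where $\Theta^{(p)}=(\theta_{j,i}^p)$. Let \[H_0=R[u_1,\dots,u_n]\big/\Big(u_i^p-\sum_{j=1}^n a_{j,i}u_j : 1\le i\le n\Big),\qquad \Delta(u_i)=u_i\otimes 1+1\otimes u_i.\] Then $H_0$ can be embedded in $H$ as an $R$-Hopf order. Furthermore: (1) $H_0$ embeds in $H$ via $\Theta$, i.e. via $u_i\mapsto\sum_j\theta_{j,i}t_j$, so that its image is \[R\Big[\Big\{\sum_{j=1}^n\theta_{j,i}t_j : 1\le i\le n\Big\}\Big]\subseteq H;\] (2) if $A,A'\in M_n(R)$ and $\Theta,\Theta'\in\mathrm{GL}_n(K)$ satisfy $\Theta A=B\Theta^{(p)}$ and $\Theta'A'=B\Theta'^{(p)}$, and $H_0,H_0'$ denote the corresponding Hopf orders in $H$ obtained via the embeddings $\Theta,\Theta'$ as in (1), then $H_0=H_0'$ if and only if $\Theta^{-1}\Theta'\in \mathrm{GL}_n(R)$.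
   Context: All Hopf algebras are commutative, cocommutative, finitely generated projective, of $p$-power rank. $t$ is primitive if $\Delta(t)=t\otimes1+1\otimes t$; $\mathrm{Prim}(H)$ is the module of primitives; $H$ is primitively generated if generated as an algebra by its primitives. An $R$-Hopf order in a $K$-Hopf algebra $H$ is a finitely generated projective $R$-submodule $H_0\subseteq H$ which is an $R$-Hopf algebra under the operations inherited from $H$ with $KH_0=H$. *)

theory Defs
  imports "HOL-Library.Poly_Mapping" "Jordan_Normal_Form.Matrix"
begin

text \<open>A normalized discrete valuation on the field K (the value at 0 is irrelevant,
  it stands for +infinity). The associated discrete valuation ring R has K as
  its field of fractions.\<close>
definition discrete_valuation :: "('k::field \<Rightarrow> int) \<Rightarrow> bool" where
  "discrete_valuation v \<longleftrightarrow>
     (\<forall>x y. x \<noteq> 0 \<and> y \<noteq> 0 \<longrightarrow> v (x * y) = v x + v y) \<and>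
     (\<forall>x y. x \<noteq> 0 \<and> y \<noteq> 0 \<and> x + y \<noteq> 0 \<longrightarrow> min (v x) (v y) \<le> v (x + y)) \<and>
     (\<exists>\<pi>. \<pi> \<noteq> 0 \<and> v \<pi> = 1)"

definition valuation_ring :: "('k::field \<Rightarrow> int) \<Rightarrow> 'k set" where
  "valuation_ring v = {x. x = 0 \<or> 0 \<le> v x}"

text \<open>Scalars from a set C (e.g. R or K), acting on 'a via the structure map sc.\<close>
definition alg_map :: "('k::field \<Rightarrow> 'a::comm_ring_1) \<Rightarrow> bool" where
  "alg_map sc \<longleftrightarrow> (\<forall>a b. sc (a + b) = sc a + sc b) \<and> (\<forall>a b. sc (a * b) = sc a * sc b) \<and> sc 1 = 1"

definition span_over :: "('k \<Rightarrow> 'a::comm_ring_1) \<Rightarrow> 'k set \<Rightarrow> 'a set \<Rightarrow> 'a set" where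
  "span_over sc C X = {y. \<exists>F c. finite F \<and> F \<subseteq> X \<and> (\<forall>x\<in>F. c x \<in> C) \<and> y = (\<Sum>x\<in>F. sc (c x) * x)}"

definition lin_indep_over :: "('k::zero \<Rightarrow> 'a::comm_ring_1) \<Rightarrow> 'k set \<Rightarrow> ('i \<Rightarrow> 'a) \<Rightarrow> 'i set \<Rightarrow> bool" where
  "lin_indep_over sc C e I \<longleftrightarrow>
     (\<forall>F c. finite F \<and> F \<subseteq> I \<and> (\<forall>i\<in>F. c i \<in> C) \<and> (\<Sum>i\<in>F. sc (c i) * e i) = 0 \<longrightarrow> (\<forall>i\<in>F. c i = 0))"

definition basis_over :: "('k::zero \<Rightarrow> 'a::comm_ring_1) \<Rightarrow> 'k set \<Rightarrow> ('i \<Rightarrow> 'a) \<Rightarrow> 'i set \<Rightarrow> 'a set \<Rightarrow> bool" where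
  "basis_over sc C e I X \<longleftrightarrow> inj_on e I \<and> lin_indep_over sc C e I \<and> span_over sc C (e ` I) = X"

definition klinear :: "('k \<Rightarrow> 'a::comm_ring_1) \<Rightarrow> ('k \<Rightarrow> 'b::comm_ring_1) \<Rightarrow> ('a \<Rightarrow> 'b) \<Rightarrow> bool" where
  "klinear sa sb f \<longleftrightarrow> (\<forall>x y. f (x + y) = f x + f y) \<and> (\<forall>c x. f (sa c * x) = sb c * f x)"

inductive_set gen_alg :: "('k \<Rightarrow> 'a::comm_ring_1) \<Rightarrow> 'k set \<Rightarrow> 'a set \<Rightarrow> 'a set"
  for sc C X where
  scal: "c \<in> C \<Longrightarrow> sc c \<in> gen_alg sc C X"
| gen: "x \<in> X \<Longrightarrow> x \<in> gen_alg sc C X"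
| add: "x \<in> gen_alg sc C X \<Longrightarrow> y \<in> gen_alg sc C X \<Longrightarrow> x + y \<in> gen_alg sc C X"
| mult: "x \<in> gen_alg sc C X \<Longrightarrow> y \<in> gen_alg sc C X \<Longrightarrow> x * y \<in> gen_alg sc C X"

text \<open>hh (with structure map sh and tp) is the tensor product H \<otimes>_K H of the
  finite-dimensional K-algebra h (structure map s): tp is K-bilinear, multiplicative,
  and sends products of a K-basis of H to a K-basis of hh.\<close>
definition is_tensor2 :: "('k::field \<Rightarrow> 'h::comm_ring_1) \<Rightarrow> ('k \<Rightarrow> 'hh::comm_ring_1) \<Rightarrow>
    ('h \<Rightarrow> 'h \<Rightarrow> 'hh) \<Rightarrow> bool" where
  "is_tensor2 s sh tp \<longleftrightarrow>
     (\<forall>x x' y. tp (x + x') y = tp x y + tp x' y) \<and>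
     (\<forall>x y y'. tp x (y + y') = tp x y + tp x y') \<and>
     (\<forall>c x y. tp (s c * x) y = sh c * tp x y) \<and>
     (\<forall>c x y. tp x (s c * y) = sh c * tp x y) \<and>
     (\<forall>x x' y y'. tp x y * tp x' y' = tp (x * x') (y * y')) \<and>
     tp 1 1 = 1 \<and>
     (\<exists>(m::nat) e. basis_over s UNIV e {..<m} UNIV \<and>
        basis_over sh UNIV (\<lambda>(i, j). tp (e i) (e j)) ({..<m} \<times> {..<m}) UNIV)"

definition is_tensor3 :: "('k::field \<Rightarrow> 'h::comm_ring_1) \<Rightarrow> ('k \<Rightarrow> 'hhh::comm_ring_1) \<Rightarrow>
    ('h \<Rightarrow> 'h \<Rightarrow> 'h \<Rightarrow> 'hhh) \<Rightarrow> bool" where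
  "is_tensor3 s sh tp3 \<longleftrightarrow>
     (\<forall>x x' y z. tp3 (x + x') y z = tp3 x y z + tp3 x' y z) \<and>
     (\<forall>x y y' z. tp3 x (y + y') z = tp3 x y z + tp3 x y' z) \<and>
     (\<forall>x y z z'. tp3 x y (z + z') = tp3 x y z + tp3 x y z') \<and>
     (\<forall>c x y z. tp3 (s c * x) y z = sh c * tp3 x y z) \<and>
     (\<forall>c x y z. tp3 x (s c * y) z = sh c * tp3 x y z) \<and>
     (\<forall>c x y z. tp3 x y (s c * z) = sh c * tp3 x y z) \<and>
     (\<forall>x x' y y' z z'. tp3 x y z * tp3 x' y' z' = tp3 (x * x') (y * y') (z * z')) \<and>
     tp3 1 1 1 = 1 \<and>
     (\<exists>(m::nat) e. basis_over s UNIV e {..<m} UNIV \<and>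
        basis_over sh UNIV (\<lambda>(i, j, k). tp3 (e i) (e j) (e k)) ({..<m} \<times> {..<m} \<times> {..<m}) UNIV)"

definition comm_cocomm_hopf ::
  "('k::field \<Rightarrow> 'h::comm_ring_1) \<Rightarrow> ('k \<Rightarrow> 'hh::comm_ring_1) \<Rightarrow> ('k \<Rightarrow> 'hhh::comm_ring_1) \<Rightarrow>
   ('h \<Rightarrow> 'h \<Rightarrow> 'hh) \<Rightarrow> ('h \<Rightarrow> 'h \<Rightarrow> 'h \<Rightarrow> 'hhh) \<Rightarrow>
   ('h \<Rightarrow> 'hh) \<Rightarrow> ('h \<Rightarrow> 'k) \<Rightarrow> ('h \<Rightarrow> 'h) \<Rightarrow> bool" where
  "comm_cocomm_hopf s sh shh tp tp3 \<Delta> \<epsilon> S \<longleftrightarrow>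
     alg_map s \<and> alg_map sh \<and> alg_map shh \<and>
     is_tensor2 s sh tp \<and> is_tensor3 s shh tp3 \<and>
     \<comment> \<open>comultiplication is a K-algebra map\<close>
     (\<forall>x y. \<Delta> (x + y) = \<Delta> x + \<Delta> y) \<and> (\<forall>x y. \<Delta> (x * y) = \<Delta> x * \<Delta> y) \<and> \<Delta> 1 = 1 \<and>
     (\<forall>c x. \<Delta> (s c * x) = sh c * \<Delta> x) \<and>
     \<comment> \<open>counit is a K-algebra map\<close>
     (\<forall>x y. \<epsilon> (x + y) = \<epsilon> x + \<epsilon> y) \<and> (\<forall>x y. \<epsilon> (x * y) = \<epsilon> x * \<epsilon> y) \<and> \<epsilon> 1 = 1 \<and>
     (\<forall>c x. \<epsilon> (s c * x) = c * \<epsilon> x) \<and>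
     \<comment> \<open>coassociativity: (\<Delta> \<otimes> id) \<Delta> = (id \<otimes> \<Delta>) \<Delta>\<close>
     (\<exists>F G L1 L2.
        (\<forall>y. klinear sh shh (F y)) \<and> (\<forall>a b y. F y (tp a b) = tp3 a b y) \<and>
        (\<forall>x. klinear sh shh (G x)) \<and> (\<forall>x a b. G x (tp a b) = tp3 x a b) \<and>
        klinear sh shh L1 \<and> (\<forall>x y. L1 (tp x y) = F y (\<Delta> x)) \<and>
        klinear sh shh L2 \<and> (\<forall>x y. L2 (tp x y) = G x (\<Delta> y)) \<and>
        (\<forall>x. L1 (\<Delta> x) = L2 (\<Delta> x))) \<and>
     \<comment> \<open>counit axioms: (\<epsilon> \<otimes> id) \<Delta> = id = (id \<otimes> \<epsilon>) \<Delta>\<close>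
     (\<exists>L. klinear sh s L \<and> (\<forall>x y. L (tp x y) = s (\<epsilon> x) * y) \<and> (\<forall>x. L (\<Delta> x) = x)) \<and>
     (\<exists>L. klinear sh s L \<and> (\<forall>x y. L (tp x y) = x * s (\<epsilon> y)) \<and> (\<forall>x. L (\<Delta> x) = x)) \<and>
     \<comment> \<open>antipode: K-linear, m (S \<otimes> id) \<Delta> = \<epsilon> = m (id \<otimes> S) \<Delta>\<close>
     klinear s s S \<and>
     (\<exists>L. klinear sh s L \<and> (\<forall>x y. L (tp x y) = S x * y) \<and> (\<forall>x. L (\<Delta> x) = s (\<epsilon> x))) \<and>
     (\<exists>L. klinear sh s L \<and> (\<forall>x y. L (tp x y) = x * S y) \<and> (\<forall>x. L (\<Delta> x) = s (\<epsilon> x))) \<and>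
     \<comment> \<open>cocommutativity: \<tau> \<Delta> = \<Delta> for the twist \<tau>\<close>
     (\<exists>T. klinear sh sh T \<and> (\<forall>x y. T (tp x y) = tp y x) \<and> (\<forall>x. T (\<Delta> x) = \<Delta> x))"

definition prim :: "('h \<Rightarrow> 'h \<Rightarrow> 'hh::comm_ring_1) \<Rightarrow> ('h::comm_ring_1 \<Rightarrow> 'hh) \<Rightarrow> 'h set" where
  "prim tp \<Delta> = {t. \<Delta> t = tp t 1 + tp 1 t}"

text \<open>X is an R-Hopf order in H: an R-subalgebra which is finitely generated projective
  (over the DVR R: free of finite rank) as R-module, spans H over K, and is closed under
  comultiplication (into the image of X \<otimes>_R X in H \<otimes>_K H), counit and antipode.\<close>
definition hopf_order ::
  "('k::field \<Rightarrow> 'h::comm_ring_1) \<Rightarrow> ('k \<Rightarrow> 'hh::comm_ring_1) \<Rightarrow> ('h \<Rightarrow> 'h \<Rightarrow> 'hh) \<Rightarrow>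
   ('h \<Rightarrow> 'hh) \<Rightarrow> ('h \<Rightarrow> 'k) \<Rightarrow> ('h \<Rightarrow> 'h) \<Rightarrow> 'k set \<Rightarrow> 'h set \<Rightarrow> bool" where
  "hopf_order s sh tp \<Delta> \<epsilon> S R X \<longleftrightarrow>
     1 \<in> X \<and> (\<forall>x\<in>X. \<forall>y\<in>X. x + y \<in> X \<and> x * y \<in> X) \<and> (\<forall>r\<in>R. \<forall>x\<in>X. s r * x \<in> X) \<and>
     (\<exists>(m::nat) e. basis_over s R e {..<m} X) \<and>
     span_over s UNIV X = UNIV \<and>
     (\<forall>x\<in>X. \<Delta> x \<in> span_over sh R {tp a b | a b. a \<in> X \<and> b \<in> X}) \<and>
     (\<forall>x\<in>X. \<epsilon> x \<in> R) \<and> (\<forall>x\<in>X. S x \<in> X)"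

type_synonym 'k mpoly = "(nat \<Rightarrow>\<^sub>0 nat) \<Rightarrow>\<^sub>0 'k"

definition var :: "nat \<Rightarrow> 'k::comm_ring_1 mpoly" where
  "var i = Poly_Mapping.single (Poly_Mapping.single i 1) 1"

definition const :: "'k::comm_ring_1 \<Rightarrow> 'k mpoly" where
  "const c = Poly_Mapping.single 0 c"

definition polys_over :: "'k::comm_ring_1 set \<Rightarrow> nat \<Rightarrow> 'k mpoly set" where
  "polys_over R n = {P. (\<forall>m. Poly_Mapping.lookup P m \<in> R) \<and> (\<forall>m\<in>Poly_Mapping.keys P. Poly_Mapping.keys m \<subseteq> {..<n})}"

definition eval_mpoly :: "('k \<Rightarrow> 'a::comm_ring_1) \<Rightarrow> (nat \<Rightarrow> 'a) \<Rightarrow> 'k::comm_ring_1 mpoly \<Rightarrow> 'a" where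
  "eval_mpoly sc x P = (\<Sum>m\<in>Poly_Mapping.keys P. sc (Poly_Mapping.lookup P m) * (\<Prod>i\<in>Poly_Mapping.keys m. x i ^ Poly_Mapping.lookup m i))"

definition ideal_gen :: "'k::comm_ring_1 set \<Rightarrow> nat \<Rightarrow> (nat \<Rightarrow> 'k mpoly) \<Rightarrow> 'k mpoly set" where
  "ideal_gen R n f = {(\<Sum>i<n. g i * f i) | g. \<forall>i<n. g i \<in> polys_over R n}"

definition rel_polys :: "nat \<Rightarrow> nat \<Rightarrow> 'k::comm_ring_1 mat \<Rightarrow> nat \<Rightarrow> 'k mpoly" where
  "rel_polys p n A i = var i ^ p - (\<Sum>j<n. const (A $$ (j, i)) * var j)"

definition entries_in :: "'k set \<Rightarrow> 'k mat \<Rightarrow> bool" where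
  "entries_in C M \<longleftrightarrow> (\<forall>i<dim_row M. \<forall>j<dim_col M. M $$ (i, j) \<in> C)"

definition GL_over :: "'k::comm_ring_1 set \<Rightarrow> nat \<Rightarrow> 'k mat \<Rightarrow> bool" where
  "GL_over C n M \<longleftrightarrow> M \<in> carrier_mat n n \<and> entries_in C M \<and>
     (\<exists>N \<in> carrier_mat n n. entries_in C N \<and> M * N = 1\<^sub>m n \<and> N * M = 1\<^sub>m n)"

definition frob_mat :: "nat \<Rightarrow> 'k::comm_ring_1 mat \<Rightarrow> 'k mat" where
  "frob_mat p M = map_mat (\<lambda>x. x ^ p) M"

text \<open>The elements sum_j theta_{j,i} t_j (images of the u_i under the embedding via Theta).\<close>
definition theta_elems :: "('k \<Rightarrow> 'h::comm_ring_1) \<Rightarrow> nat \<Rightarrow> 'k mat \<Rightarrow> (nat \<Rightarrow> 'h) \<Rightarrow> nat \<Rightarrow> 'h" where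
  "theta_elems s n \<Theta> t i = (\<Sum>j<n. s (\<Theta> $$ (j, i)) * t j)"

end

theory Submission
  imports Defs "HOL-Computational_Algebra.Primes"
begin

text \<open>
  The elements \<open>u\<^sub>i = \<Sum>\<^sub>j \<theta>\<^sub>j\<^sub>i t\<^sub>j\<close> are primitive, and since the Frobenius is additive in
  characteristic \<open>p\<close>, the identity \<open>\<Theta> * A = B * frob_mat p \<Theta>\<close> says exactly that \<open>u\<^sub>i\<^sup>p = \<Sum>\<^sub>j a\<^sub>j\<^sub>i u\<^sub>j\<close>.
  Hence every monomial in the \<open>u\<^sub>i\<close> is an \<open>R\<close>-combination of the \<open>p\<^sup>n\<close> reduced monomials
  (all exponents \<open>< p\<close>), which therefore span \<open>H\<^sub>0 = R[u]\<close> over \<open>R\<close>.  They also span \<open>H\<close>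
  over \<open>K\<close>, because the \<open>t\<^sub>j\<close> are \<open>K\<close>-combinations of the \<open>u\<^sub>i\<close> and the primitives generate
  \<open>H\<close>; as \<open>dim\<^sub>K H = p\<^sup>n\<close> they are a \<open>K\<close>-basis.  So \<open>H\<^sub>0\<close> is \<open>R\<close>-free with \<open>K H\<^sub>0 = H\<close>, and the
  same reduction shows that the kernel of \<open>R[x] \<rightarrow> H\<^sub>0\<close> is generated by the relations.
  Primitivity of the \<open>u\<^sub>i\<close> makes \<open>H\<^sub>0\<close> stable under \<open>\<Delta>\<close> and \<open>\<epsilon>\<close>, and, by induction on the
  length of a monomial, under \<open>S\<close>.  Finally the \<open>u'\<close> of \<open>\<Theta>' = \<Theta> M\<close> are the \<open>M\<close>-combinations of
  the \<open>u\<close>, and an element of \<open>H\<^sub>0\<close> has \<open>R\<close>-coordinates in the \<open>K\<close>-basis, so \<open>H\<^sub>0 = H\<^sub>0'\<close>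
  iff both \<open>M\<close> and \<open>M\<^sup>-\<^sup>1\<close> have entries in \<open>R\<close>.
\<close>

definition is_subring :: "'a::comm_ring_1 set \<Rightarrow> bool" where
  "is_subring C \<longleftrightarrow>
     0 \<in> C \<and> 1 \<in> C \<and> (\<forall>x\<in>C. - x \<in> C) \<and> (\<forall>x\<in>C. \<forall>y\<in>C. x + y \<in> C \<and> x * y \<in> C)"

lemma is_subring_UNIV: "is_subring UNIV"
  by (simp add: is_subring_def)

context
  fixes C :: "'a::comm_ring_1 set"
  assumes C: "is_subring C"
begin

lemma subring_zero: "0 \<in> C" and subring_one: "1 \<in> C"
  and subring_uminus: "x \<in> C \<Longrightarrow> - x \<in> C"
  and subring_add: "x \<in> C \<Longrightarrow> y \<in> C \<Longrightarrow> x + y \<in> C"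
  and subring_mult: "x \<in> C \<Longrightarrow> y \<in> C \<Longrightarrow> x * y \<in> C"
  using C by (auto simp: is_subring_def)

end

lemma is_subring_valuation_ring:
  assumes v: "discrete_valuation v"
  shows "is_subring (valuation_ring v)"
proof -
  have mult: "v (x * y) = v x + v y" if "x \<noteq> 0" "y \<noteq> 0" for x y
    using v that unfolding discrete_valuation_def by blast
  have add: "min (v x) (v y) \<le> v (x + y)" if "x \<noteq> 0" "y \<noteq> 0" "x + y \<noteq> 0" for x y
    using v that unfolding discrete_valuation_def by blast
  have "v 1 = 0"
    using mult[of 1 1] by simp
  moreover have "v (- 1) = 0"
    using mult[of "- 1" "- 1"] \<open>v 1 = 0\<close> by simp
  ultimately have neg: "v (- x) = v x" if "x \<noteq> 0" for x
    using mult[of "- 1" x] that by simp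
  have "x + y \<in> valuation_ring v" if "x \<in> valuation_ring v" "y \<in> valuation_ring v" for x y
    using that add[of x y] by (cases "x = 0 \<or> y = 0 \<or> x + y = 0") (auto simp: valuation_ring_def)
  moreover have "x * y \<in> valuation_ring v" if "x \<in> valuation_ring v" "y \<in> valuation_ring v" for x y
    using that mult[of x y] by (cases "x = 0 \<or> y = 0") (auto simp: valuation_ring_def)
  moreover have "- x \<in> valuation_ring v" if "x \<in> valuation_ring v" for x
    using that neg[of x] by (cases "x = 0") (auto simp: valuation_ring_def)
  ultimately show ?thesis
    unfolding is_subring_def by (auto simp: valuation_ring_def \<open>v 1 = 0\<close>)
qed

context
  fixes sc :: "'k::field \<Rightarrow> 'a::comm_ring_1"
  assumes sc: "alg_map sc"
begin

lemma alg_map_add: "sc (a + b) = sc a + sc b"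
  and alg_map_mult: "sc (a * b) = sc a * sc b"
  and alg_map_one: "sc 1 = 1"
  using sc by (simp_all add: alg_map_def)

lemma alg_map_zero: "sc 0 = 0"
  using alg_map_add[of 0 0] by simp

lemma alg_map_uminus: "sc (- a) = - sc a"
  using alg_map_add[of a "- a"] by (simp add: alg_map_zero eq_neg_iff_add_eq_0 add.commute)

lemma alg_map_diff: "sc (a - b) = sc a - sc b"
  using alg_map_add[of a "- b"] by (simp add: alg_map_uminus)

lemma alg_map_sum: "sc (sum f F) = (\<Sum>i\<in>F. sc (f i))"
  by (induction F rule: infinite_finite_induct) (auto simp: alg_map_add alg_map_zero)

lemma alg_map_power: "sc (a ^ k) = sc a ^ k"
  by (induction k) (auto simp: alg_map_mult alg_map_one)

lemma alg_map_of_nat: "sc (of_nat k) = of_nat k"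
  by (induction k) (auto simp: alg_map_add alg_map_one alg_map_zero)

lemma alg_map_eq_iff: "sc a = sc b \<longleftrightarrow> a = b"
proof
  assume "sc a = sc b"
  show "a = b"
  proof (rule ccontr)
    assume "a \<noteq> b"
    then have "sc ((a - b) * inverse (a - b)) = 1"
      by (simp add: alg_map_one)
    with \<open>sc a = sc b\<close> show False
      by (simp add: alg_map_mult alg_map_diff)
  qed
qed simp

lemma alg_map_nontrivial: "(1::'a) \<noteq> 0"
  using alg_map_eq_iff[of 1 0] by (simp add: alg_map_one alg_map_zero)

end

lemma CHAR_eq_prime:
  assumes "prime p" "of_nat p = (0::'a::semiring_1)" "(1::'a) \<noteq> 0"
  shows "CHAR('a) = p"
proof -
  have "CHAR('a) dvd p"
    using assms(2) by (simp add: of_nat_eq_0_iff_char_dvd)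
  moreover have "CHAR('a) \<noteq> 1"
    using assms(3) of_nat_CHAR[where 'a = 'a] by auto
  ultimately show ?thesis
    using assms(1) by (auto simp: prime_nat_iff)
qed

lemma mat_mult_index_square:
  assumes "M1 \<in> carrier_mat n n" "M2 \<in> carrier_mat n n" "i < n" "j < n"
  shows "(M1 * M2) $$ (i, j) = (\<Sum>k<n. M1 $$ (i, k) * M2 $$ (k, j))"
  using assms by (simp add: index_mult_mat scalar_prod_def atLeast0LessThan)

inductive_set ring_span :: "('k \<Rightarrow> 'a::comm_ring_1) \<Rightarrow> 'k set \<Rightarrow> 'a set \<Rightarrow> 'a set"
  for sc C Y where
  zero: "0 \<in> ring_span sc C Y"
| scale_base: "c \<in> C \<Longrightarrow> y \<in> Y \<Longrightarrow> sc c * y \<in> ring_span sc C Y"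
| add: "x \<in> ring_span sc C Y \<Longrightarrow> y \<in> ring_span sc C Y \<Longrightarrow> x + y \<in> ring_span sc C Y"

lemma ring_span_mono_scalars:
  assumes "C \<subseteq> C'" "x \<in> ring_span sc C Y"
  shows "x \<in> ring_span sc C' Y"
  using assms(2) by induction (use assms(1) in \<open>auto intro: ring_span.intros\<close>)

lemma gen_alg_least:
  assumes "\<And>c. c \<in> C \<Longrightarrow> sc c \<in> Z" "Y \<subseteq> Z"
    "\<And>x y. x \<in> Z \<Longrightarrow> y \<in> Z \<Longrightarrow> x + y \<in> Z" "\<And>x y. x \<in> Z \<Longrightarrow> y \<in> Z \<Longrightarrow> x * y \<in> Z"
  shows "gen_alg sc C Y \<subseteq> Z"
proof
  fix x assume "x \<in> gen_alg sc C Y"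
  then show "x \<in> Z"
    by induction (use assms in blast)+
qed

context
  fixes sc :: "'k::field \<Rightarrow> 'a::comm_ring_1" and C :: "'k set"
  assumes sc: "alg_map sc" and C: "is_subring C"
begin

lemma ring_span_base: "y \<in> Y \<Longrightarrow> y \<in> ring_span sc C Y"
  using ring_span.scale_base[OF subring_one[OF C]] by (metis alg_map_one[OF sc] mult_1)

lemma ring_span_scale:
  assumes "c \<in> C" "x \<in> ring_span sc C Y"
  shows "sc c * x \<in> ring_span sc C Y"
  using assms(2)
proof induction
  case (scale_base d y)
  then show ?case
    using ring_span.scale_base[where sc = sc and c = "c * d"] subring_mult[OF C assms(1)]
    by (simp add: alg_map_mult[OF sc] mult.assoc)
qed (simp_all add: distrib_left ring_span.intros)

lemma ring_span_sum: "(\<And>i. i \<in> F \<Longrightarrow> f i \<in> ring_span sc C Y) \<Longrightarrow> sum f F \<in> ring_span sc C Y"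
  by (induction F rule: infinite_finite_induct) (auto intro: ring_span.zero ring_span.add)

lemma ring_span_mult_right:
  assumes "\<And>y. y \<in> Y \<Longrightarrow> y * w \<in> ring_span sc C Y'" "x \<in> ring_span sc C Y"
  shows "x * w \<in> ring_span sc C Y'"
  using assms(2)
proof induction
  case (scale_base c y)
  then show ?case
    using assms(1)[of y] ring_span_scale[of c "y * w" Y'] by (simp add: mult.assoc)
qed (simp_all add: distrib_right ring_span.intros)

lemma ring_span_mult_closed:
  assumes "\<And>y y'. y \<in> Y \<Longrightarrow> y' \<in> Y \<Longrightarrow> y * y' \<in> ring_span sc C Y"
    and "x \<in> ring_span sc C Y" "x' \<in> ring_span sc C Y"
  shows "x * x' \<in> ring_span sc C Y"
proof (rule ring_span_mult_right[OF _ assms(2)])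
  fix y assume "y \<in> Y"
  have "x' * y \<in> ring_span sc C Y"
    by (rule ring_span_mult_right[OF _ assms(3)]) (use assms(1) \<open>y \<in> Y\<close> in \<open>simp add: mult.commute\<close>)
  then show "y * x' \<in> ring_span sc C Y"
    by (simp add: mult.commute)
qed

lemma ring_span_eq_span_over: "ring_span sc C Y = span_over sc C Y"
proof
  show "ring_span sc C Y \<subseteq> span_over sc C Y"
  proof
    fix x assume "x \<in> ring_span sc C Y"
    then show "x \<in> span_over sc C Y"
    proof induction
      case zero
      then show ?case
        unfolding span_over_def by (intro CollectI exI[of _ "{}"]) auto
    next
      case (scale_base c y)
      then show ?case
        unfolding span_over_def by (intro CollectI exI[of _ "{y}"] exI[of _ "\<lambda>_. c"]) auto
    next
      case (add x y)
      from add.IH(1) obtain F c where F: "finite F" "F \<subseteq> Y" "\<forall>x\<in>F. c x \<in> C"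
        "x = (\<Sum>x\<in>F. sc (c x) * x)" unfolding span_over_def by blast
      from add.IH(2) obtain G d where G: "finite G" "G \<subseteq> Y" "\<forall>x\<in>G. d x \<in> C"
        "y = (\<Sum>x\<in>G. sc (d x) * x)" unfolding span_over_def by blast
      define c' where "c' z = (if z \<in> F then c z else 0)" for z
      define d' where "d' z = (if z \<in> G then d z else 0)" for z
      have "x = (\<Sum>z\<in>F \<union> G. sc (c' z) * z)"
        unfolding F(4) using F(1) G(1)
        by (intro sum.mono_neutral_cong_left) (auto simp: c'_def alg_map_zero[OF sc])
      moreover have "y = (\<Sum>z\<in>F \<union> G. sc (d' z) * z)"
        unfolding G(4) using F(1) G(1)
        by (intro sum.mono_neutral_cong_left) (auto simp: d'_def alg_map_zero[OF sc])
      ultimately have "x + y = (\<Sum>z\<in>F \<union> G. sc (c' z + d' z) * z)"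
        by (simp add: alg_map_add[OF sc] distrib_right sum.distrib)
      moreover have "\<forall>z\<in>F \<union> G. c' z + d' z \<in> C"
        using F(3) G(3) subring_zero[OF C] subring_add[OF C] by (auto simp: c'_def d'_def)
      ultimately show ?case
        unfolding span_over_def using F G
        by (intro CollectI exI[of _ "F \<union> G"] exI[of _ "\<lambda>z. c' z + d' z"]) auto
    qed
  qed
  show "span_over sc C Y \<subseteq> ring_span sc C Y"
    unfolding span_over_def by (auto intro!: ring_span_sum ring_span.scale_base)
qed

end

locale prim_gen_hopf =
  fixes s :: "'k::field \<Rightarrow> 'h::comm_ring_1"
    and sh :: "'k \<Rightarrow> 'hh::comm_ring_1" and shh :: "'k \<Rightarrow> 'hhh::comm_ring_1"
    and tp :: "'h \<Rightarrow> 'h \<Rightarrow> 'hh" and tp3 :: "'h \<Rightarrow> 'h \<Rightarrow> 'h \<Rightarrow> 'hhh"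
    and \<Delta> :: "'h \<Rightarrow> 'hh" and \<epsilon> :: "'h \<Rightarrow> 'k" and S :: "'h \<Rightarrow> 'h"
    and v :: "'k \<Rightarrow> int" and p n :: nat and t :: "nat \<Rightarrow> 'h"
    and B :: "'k mat"
  assumes dvr: "discrete_valuation v"
    and char_p: "prime p" "of_nat p = (0::'k)"
    and hopf: "comm_cocomm_hopf s sh shh tp tp3 \<Delta> \<epsilon> S"
    and rank: "\<exists>e. basis_over s UNIV e {..<p ^ n} (UNIV :: 'h set)"
    and prim_gen: "gen_alg s UNIV (prim tp \<Delta>) = UNIV"
    and prim_basis: "basis_over s UNIV t {..<n} (prim tp \<Delta>)"
    and B_carrier: "B \<in> carrier_mat n n"
    and t_power_p: "\<forall>i<n. t i ^ p = (\<Sum>j<n. s (B $$ (j, i)) * t j)"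
begin

abbreviation "R \<equiv> valuation_ring v"

lemma R_subring: "is_subring R"
  using is_subring_valuation_ring[OF dvr] .

lemma alg_map_s: "alg_map s"
  using hopf unfolding comm_cocomm_hopf_def by (elim conjE)

lemma alg_map_sh: "alg_map sh"
  using hopf unfolding comm_cocomm_hopf_def by (elim conjE)

lemma s_add: "s (a + b) = s a + s b" and s_mult: "s (a * b) = s a * s b" and s_one: "s 1 = 1"
  and s_zero: "s 0 = 0" and s_uminus: "s (- a) = - s a" and s_diff: "s (a - b) = s a - s b"
  and s_sum: "s (sum f F) = (\<Sum>i\<in>F. s (f i))" and s_power: "s (a ^ k) = s a ^ k"
  and s_eq_iff: "s a = s b \<longleftrightarrow> a = b"
  by (simp_all add: alg_map_s alg_map_add alg_map_mult alg_map_one alg_map_zero alg_map_uminus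
      alg_map_diff alg_map_sum alg_map_power alg_map_eq_iff)

lemma tp_add_left: "tp (x + x') y = tp x y + tp x' y"
  and tp_add_right: "tp x (y + y') = tp x y + tp x y'"
  and tp_scale_left: "tp (s c * x) y = sh c * tp x y"
  and tp_scale_right: "tp x (s c * y) = sh c * tp x y"
  and tp_mult: "tp x y * tp x' y' = tp (x * x') (y * y')"
  and tp_one: "tp 1 1 = 1"
proof -
  have "is_tensor2 s sh tp"
    using hopf unfolding comm_cocomm_hopf_def by blast
  then show "tp (x + x') y = tp x y + tp x' y" "tp x (y + y') = tp x y + tp x y'"
    "tp (s c * x) y = sh c * tp x y" "tp x (s c * y) = sh c * tp x y"
    "tp x y * tp x' y' = tp (x * x') (y * y')" "tp 1 1 = 1"
    unfolding is_tensor2_def by blast+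
qed

lemma comult_add: "\<Delta> (x + y) = \<Delta> x + \<Delta> y"
  using hopf unfolding comm_cocomm_hopf_def by (elim conjE) (simp only:)

lemma comult_mult: "\<Delta> (x * y) = \<Delta> x * \<Delta> y"
  using hopf unfolding comm_cocomm_hopf_def by (elim conjE) (simp only:)

lemma comult_one: "\<Delta> 1 = 1"
  using hopf unfolding comm_cocomm_hopf_def by (elim conjE) (simp only:)

lemma comult_scale: "\<Delta> (s c * x) = sh c * \<Delta> x"
  using hopf unfolding comm_cocomm_hopf_def by (elim conjE) (simp only:)

lemma counit_add: "\<epsilon> (x + y) = \<epsilon> x + \<epsilon> y"
  using hopf unfolding comm_cocomm_hopf_def by (elim conjE) (simp only:)

lemma counit_mult: "\<epsilon> (x * y) = \<epsilon> x * \<epsilon> y"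
  using hopf unfolding comm_cocomm_hopf_def by (elim conjE) (simp only:)

lemma counit_one: "\<epsilon> 1 = 1"
  using hopf unfolding comm_cocomm_hopf_def by (elim conjE) (simp only:)

lemma counit_scale: "\<epsilon> (s c * x) = c * \<epsilon> x"
  using hopf unfolding comm_cocomm_hopf_def by (elim conjE) (simp only:)

lemma counit_law: "\<exists>L. klinear sh s L \<and> (\<forall>x y. L (tp x y) = s (\<epsilon> x) * y) \<and> (\<forall>x. L (\<Delta> x) = x)"
  using hopf unfolding comm_cocomm_hopf_def by (elim conjE) (simp only:)

lemma antipode_linear: "klinear s s S"
  using hopf unfolding comm_cocomm_hopf_def by (elim conjE) (simp only:)

lemma antipode_law: "\<exists>L. klinear sh s L \<and> (\<forall>x y. L (tp x y) = S x * y) \<and> (\<forall>x. L (\<Delta> x) = s (\<epsilon> x))"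
  using hopf unfolding comm_cocomm_hopf_def by (elim conjE) (simp only:)

lemma antipode_add: "S (x + y) = S x + S y" and antipode_scale: "S (s c * x) = s c * S x"
  using antipode_linear unfolding klinear_def by blast+

lemma p_ge_2: "p \<ge> 2"
  using char_p(1) prime_ge_2_nat by blast

lemma CHAR_h: "CHAR('h) = p"
proof (rule CHAR_eq_prime[OF char_p(1)])
  show "of_nat p = (0::'h)"
    using alg_map_of_nat[OF alg_map_s, of p] char_p(2) s_zero by simp
qed (rule alg_map_nontrivial[OF alg_map_s])

lemma power_p_sum: "(\<Sum>i\<in>F. f i) ^ p = (\<Sum>i\<in>F. (f i :: 'h) ^ p)"
  using freshmans_dream_sum[where f = f and A = F and n = p] char_p(1) unfolding CHAR_h by blast

sublocale K: vector_space "\<lambda>c x. s c * x"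
  by unfold_locales (auto simp: s_add s_mult algebra_simps s_one)

lemma K_span_eq_span_over: "K.span Y = span_over s UNIV Y"
  unfolding K.span_explicit span_over_def by auto

lemma ring_span_UNIV_eq_K_span: "ring_span s UNIV Y = K.span Y"
  using ring_span_eq_span_over[OF alg_map_s is_subring_UNIV] K_span_eq_span_over by simp

lemma K_basis_of_rank: "\<exists>E. finite E \<and> K.independent E \<and> K.span E = UNIV \<and> card E = p ^ n"
proof -
  obtain e where e: "basis_over s UNIV e {..<p ^ n} (UNIV :: 'h set)"
    using rank by blast
  let ?E = "e ` {..<p ^ n}"
  have inj: "inj_on e {..<p ^ n}" and li: "lin_indep_over s UNIV e {..<p ^ n}"
    and sp: "span_over s UNIV ?E = UNIV"
    using e unfolding basis_over_def by blast+
  have "K.independent ?E"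
    unfolding K.independent_explicit_finite_subsets
  proof (intro allI impI ballI)
    fix T u x assume T: "T \<subseteq> ?E" "finite T" and u: "(\<Sum>v\<in>T. s (u v) * v) = 0" and x: "x \<in> T"
    define F where "F = {i\<in>{..<p^n}. e i \<in> T}"
    have eF: "e ` F = T"
      using T(1) unfolding F_def by auto
    have injF: "inj_on e F"
      using inj unfolding F_def by (rule inj_on_subset) auto
    have sum0: "(\<Sum>i\<in>F. s (u (e i)) * e i) = 0"
      using u eF sum.reindex[OF injF, of "\<lambda>v. s (u v) * v"] by simp
    have "u (e i) = 0" if "i \<in> F" for i
      by (rule li[unfolded lin_indep_over_def, rule_format, of F "\<lambda>i. u (e i)"])
        (use sum0 that in \<open>auto simp: F_def\<close>)
    then show "u x = 0"
      using x eF by blast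
  qed
  moreover have "K.span ?E = UNIV"
    using sp K_span_eq_span_over by simp
  ultimately show ?thesis
    using card_image[OF inj] by auto
qed

lemma spanning_set_of_rank_card_independent:
  assumes "finite E" "K.span E = UNIV" "card E \<le> p ^ n"
  shows "K.independent E \<and> card E = p ^ n"
proof -
  obtain E0 where E0: "finite E0" "K.independent E0" "K.span E0 = UNIV" "card E0 = p ^ n"
    using K_basis_of_rank by blast
  interpret fd: finite_dimensional_vector_space "\<lambda>c x. s c * x" E0
    by unfold_locales (use E0 in auto)
  have "K.independent E"
    by (rule fd.card_le_dim_spanning[of E UNIV]) (use assms E0 in auto)
  moreover have "card E0 \<le> card E"
    using K.independent_span_bound[OF assms(1) E0(2)] assms(2) by auto
  ultimately show ?thesis
    using assms(3) E0 by auto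
qed

lemma K_independent_coeffs_eq:
  assumes "K.independent E" "F \<subseteq> E" "finite F"
    and "(\<Sum>x\<in>F. s (a x) * x) = (\<Sum>x\<in>F. s (b x) * x)" "x \<in> F"
  shows "a x = b x"
proof -
  have indep: "c y = 0" if "(\<Sum>x\<in>F. s (c x) * x) = 0" "y \<in> F" for c y
    using assms(1-3) that unfolding K.independent_explicit_finite_subsets by blast
  have "(\<Sum>x\<in>F. s (a x - b x) * x) = 0"
    using assms(4) by (simp add: s_diff left_diff_distrib sum_subtractf)
  then show ?thesis
    using indep[of "\<lambda>x. a x - b x" x] assms(5) by simp
qed

lemma prim_add: "x \<in> prim tp \<Delta> \<Longrightarrow> y \<in> prim tp \<Delta> \<Longrightarrow> x + y \<in> prim tp \<Delta>"
  by (simp add: prim_def comult_add tp_add_left tp_add_right)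

lemma prim_scale: "x \<in> prim tp \<Delta> \<Longrightarrow> s c * x \<in> prim tp \<Delta>"
  by (simp add: prim_def comult_scale tp_scale_left tp_scale_right distrib_left)

lemma prim_zero: "0 \<in> prim tp \<Delta>"
  using comult_add[of 0 0] tp_add_left[of 0 0 1] tp_add_right[of 1 0 0] by (simp add: prim_def)

lemma prim_sum: "(\<And>i. i \<in> F \<Longrightarrow> f i \<in> prim tp \<Delta>) \<Longrightarrow> sum f F \<in> prim tp \<Delta>"
  by (induction F rule: infinite_finite_induct) (auto intro: prim_add prim_zero)

lemma t_prim: "i < n \<Longrightarrow> t i \<in> prim tp \<Delta>"
  using prim_basis K.span_base[of "t i" "t ` {..<n}"]
  unfolding basis_over_def K_span_eq_span_over by auto

lemma prim_subset_K_span_t: "prim tp \<Delta> \<subseteq> K.span (t ` {..<n})"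
  using prim_basis unfolding basis_over_def K_span_eq_span_over by blast

lemma counit_prim:
  assumes "x \<in> prim tp \<Delta>"
  shows "\<epsilon> x = 0"
proof -
  obtain L where L: "klinear sh s L" "\<forall>x y. L (tp x y) = s (\<epsilon> x) * y" "\<forall>x. L (\<Delta> x) = x"
    using counit_law by blast
  have "x = L (\<Delta> x)"
    using L(3) by simp
  also have "\<dots> = L (tp x 1 + tp 1 x)"
    using assms by (simp add: prim_def)
  also have "\<dots> = s (\<epsilon> x) + x"
    using L(1,2) unfolding klinear_def by (simp add: counit_one s_one)
  finally show ?thesis
    using s_eq_iff[of "\<epsilon> x" 0] by (simp add: s_zero)
qed

lemma theta_elems_mult:
  assumes \<Theta>: "\<Theta> \<in> carrier_mat n n" and M: "M \<in> carrier_mat n n" and i: "i < n"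
  shows "theta_elems s n (\<Theta> * M) t i = (\<Sum>k<n. s (M $$ (k, i)) * theta_elems s n \<Theta> t k)"
proof -
  have "s ((\<Theta> * M) $$ (j, i)) * t j = (\<Sum>k<n. s (M $$ (k, i)) * (s (\<Theta> $$ (j, k)) * t j))"
    if "j < n" for j
    using mat_mult_index_square[OF \<Theta> M that i]
    by (simp add: s_sum s_mult sum_distrib_left mult_ac)
  then have "theta_elems s n (\<Theta> * M) t i = (\<Sum>j<n. \<Sum>k<n. s (M $$ (k, i)) * (s (\<Theta> $$ (j, k)) * t j))"
    unfolding theta_elems_def by simp
  also have "\<dots> = (\<Sum>k<n. s (M $$ (k, i)) * theta_elems s n \<Theta> t k)"
    by (subst sum.swap) (simp add: theta_elems_def sum_distrib_left)
  finally show ?thesis .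
qed

end

section \<open>The order \<open>H\<^sub>0 = R[u]\<close> attached to \<open>\<Theta>\<close>\<close>

locale theta_order = prim_gen_hopf s sh shh tp tp3 \<Delta> \<epsilon> S v p n t B
  for s :: "'k::field \<Rightarrow> 'h::comm_ring_1"
    and sh :: "'k \<Rightarrow> 'hh::comm_ring_1" and shh :: "'k \<Rightarrow> 'hhh::comm_ring_1"
    and tp :: "'h \<Rightarrow> 'h \<Rightarrow> 'hh" and tp3 :: "'h \<Rightarrow> 'h \<Rightarrow> 'h \<Rightarrow> 'hhh"
    and \<Delta> :: "'h \<Rightarrow> 'hh" and \<epsilon> :: "'h \<Rightarrow> 'k" and S :: "'h \<Rightarrow> 'h"
    and v :: "'k \<Rightarrow> int" and p n :: nat and t :: "nat \<Rightarrow> 'h"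
    and B :: "'k mat" +
  fixes A \<Theta> :: "'k mat"
  assumes A_carrier: "A \<in> carrier_mat n n" and A_entries: "entries_in (valuation_ring v) A"
    and \<Theta>_GL: "GL_over UNIV n \<Theta>" and \<Theta>_A: "\<Theta> * A = B * frob_mat p \<Theta>"
begin

abbreviation "u \<equiv> theta_elems s n \<Theta> t"

abbreviation "H\<^sub>0 \<equiv> gen_alg s R (u ` {..<n})"

lemma \<Theta>_carrier: "\<Theta> \<in> carrier_mat n n"
  using \<Theta>_GL unfolding GL_over_def by blast

lemma A_in_R: "i < n \<Longrightarrow> j < n \<Longrightarrow> A $$ (i, j) \<in> R"
  using A_entries A_carrier unfolding entries_in_def by auto

lemma u_eq: "u i = (\<Sum>j<n. s (\<Theta> $$ (j, i)) * t j)"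
  by (simp add: theta_elems_def)

lemma u_prim: "u i \<in> prim tp \<Delta>"
  unfolding u_eq by (rule prim_sum) (auto intro: prim_scale t_prim)

lemma u_power_p:
  assumes i: "i < n"
  shows "u i ^ p = (\<Sum>j<n. s (A $$ (j, i)) * u j)"
proof -
  have frob: "frob_mat p \<Theta> \<in> carrier_mat n n" "frob_mat p \<Theta> $$ (j, i) = \<Theta> $$ (j, i) ^ p"
    if "j < n" for j
    using \<Theta>_carrier i that by (auto simp: frob_mat_def)
  have "u i ^ p = (\<Sum>j<n. s (\<Theta> $$ (j, i) ^ p) * (\<Sum>k<n. s (B $$ (k, j)) * t k))"
    unfolding u_eq power_p_sum using t_power_p by (simp add: power_mult_distrib s_power)
  also have "\<dots> = (\<Sum>k<n. \<Sum>j<n. s (B $$ (k, j) * frob_mat p \<Theta> $$ (j, i)) * t k)"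
    by (subst sum.swap) (simp add: sum_distrib_left s_mult frob mult_ac)
  also have "\<dots> = (\<Sum>k<n. s ((B * frob_mat p \<Theta>) $$ (k, i)) * t k)"
    using mat_mult_index_square[OF B_carrier frob(1) _ i] i by (simp add: s_sum sum_distrib_right)
  also have "\<dots> = (\<Sum>k<n. \<Sum>l<n. s (A $$ (l, i)) * (s (\<Theta> $$ (k, l)) * t k))"
    unfolding \<Theta>_A[symmetric] using mat_mult_index_square[OF \<Theta>_carrier A_carrier _ i]
    by (simp add: s_sum s_mult sum_distrib_left mult_ac)
  also have "\<dots> = (\<Sum>l<n. s (A $$ (l, i)) * u l)"
    by (subst sum.swap) (simp add: u_eq sum_distrib_left)
  finally show ?thesis .
qed

lemma t_in_K_span_u:
  assumes j: "j < n"
  shows "t j \<in> K.span (u ` {..<n})"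
proof -
  obtain N where N: "N \<in> carrier_mat n n" "\<Theta> * N = 1\<^sub>m n"
    using \<Theta>_GL unfolding GL_over_def by blast
  have "(\<Sum>i<n. s (N $$ (i, j)) * u i) = theta_elems s n (\<Theta> * N) t j"
    using theta_elems_mult[OF \<Theta>_carrier N(1) j] by simp
  also have "\<dots> = (\<Sum>k<n. if k = j then t k else 0)"
    unfolding theta_elems_def N(2) using j by (intro sum.cong) (auto simp: s_one s_zero)
  also have "\<dots> = t j"
    using j by simp
  finally have "t j = (\<Sum>i<n. s (N $$ (i, j)) * u i)" ..
  moreover have "(\<Sum>i<n. s (N $$ (i, j)) * u i) \<in> K.span (u ` {..<n})"
    by (intro K.span_sum K.span_scale K.span_base) auto
  ultimately show ?thesis
    by simp
qed

definition u_monomial :: "(nat \<Rightarrow> nat) \<Rightarrow> 'h" where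
  "u_monomial \<beta> = (\<Prod>i<n. u i ^ \<beta> i)"

definition reduced_exponents :: "(nat \<Rightarrow> nat) set" where
  "reduced_exponents = PiE {..<n} (\<lambda>_. {..<p})"

definition reduced_monomials :: "'h set" where
  "reduced_monomials = u_monomial ` reduced_exponents"

lemma finite_reduced_monomials: "finite reduced_monomials"
  by (simp add: reduced_monomials_def reduced_exponents_def finite_PiE)

lemma card_reduced_monomials_le: "card reduced_monomials \<le> p ^ n"
  unfolding reduced_monomials_def
  using card_image_le[of reduced_exponents u_monomial]
  by (simp add: reduced_exponents_def finite_PiE card_PiE)

lemma u_monomial_fun_upd:
  assumes "j < n"
  shows "u_monomial (\<beta>(j := m)) = u_monomial (\<beta>(j := 0)) * u j ^ m"
  using assms by (simp add: u_monomial_def prod.remove mult.commute)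

lemma reduced_exponents_fun_upd:
  "\<beta> \<in> reduced_exponents \<Longrightarrow> j < n \<Longrightarrow> m < p \<Longrightarrow> \<beta>(j := m) \<in> reduced_exponents"
  unfolding reduced_exponents_def using PiE_fun_upd[of m "\<lambda>_. {..<p}" j \<beta> "{..<n}"]
  by (simp add: insert_absorb)

lemma one_in_reduced_monomials: "1 \<in> reduced_monomials"
proof -
  have "restrict (\<lambda>_. 0) {..<n} \<in> reduced_exponents"
    using p_ge_2 by (auto simp: reduced_exponents_def)
  moreover have "u_monomial (restrict (\<lambda>_. 0) {..<n}) = 1"
    by (simp add: u_monomial_def)
  ultimately show ?thesis
    unfolding reduced_monomials_def by force
qed

lemma unit_exponent:
  assumes "j < n"
  shows "restrict (\<lambda>i. if i = j then 1 else 0) {..<n} \<in> reduced_exponents"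
    and "u_monomial (restrict (\<lambda>i. if i = j then 1 else 0) {..<n}) = u j"
proof -
  show "restrict (\<lambda>i. if i = j then 1 else 0) {..<n} \<in> reduced_exponents"
    using p_ge_2 by (auto simp: reduced_exponents_def)
  have "u_monomial (restrict (\<lambda>i. if i = j then 1 else 0) {..<n}) = (\<Prod>i<n. if i = j then u i else 1)"
    unfolding u_monomial_def by (rule prod.cong) auto
  also have "\<dots> = u j"
    using assms by simp
  finally show "u_monomial (restrict (\<lambda>i. if i = j then 1 else 0) {..<n}) = u j" .
qed

lemma u_in_reduced_monomials: "j < n \<Longrightarrow> u j \<in> reduced_monomials"
  unfolding reduced_monomials_def using unit_exponent by (metis image_eqI)

lemma u_monomial_times_u:
  assumes "\<beta> \<in> reduced_exponents" "j < n"
  shows "u_monomial \<beta> * u j \<in> ring_span s R reduced_monomials"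
  using assms
proof (induction "\<Sum>i<n. \<beta> i" arbitrary: \<beta> j rule: less_induct)
  case less
  let ?\<beta>\<^sub>0 = "\<beta>(j := 0)"
  have \<beta>\<^sub>0: "?\<beta>\<^sub>0 \<in> reduced_exponents"
    using reduced_exponents_fun_upd[OF less.prems] p_ge_2 by simp
  have \<beta>_split: "u_monomial \<beta> = u_monomial ?\<beta>\<^sub>0 * u j ^ \<beta> j"
    using u_monomial_fun_upd[OF less.prems(2), of \<beta> "\<beta> j"] by simp
  have "\<beta> j < p"
    using less.prems unfolding reduced_exponents_def by auto
  show ?case
  proof (cases "\<beta> j + 1 < p")
    case True
    have "u_monomial (\<beta>(j := \<beta> j + 1)) = u_monomial \<beta> * u j"
      using u_monomial_fun_upd[OF less.prems(2), of \<beta> "\<beta> j + 1"] \<beta>_split by (simp add: mult.assoc)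
    moreover have "\<beta>(j := \<beta> j + 1) \<in> reduced_exponents"
      using True by (rule reduced_exponents_fun_upd[OF less.prems])
    ultimately have "u_monomial \<beta> * u j \<in> reduced_monomials"
      unfolding reduced_monomials_def by (rule image_eqI[OF sym])
    then show ?thesis
      by (rule ring_span_base[OF alg_map_s R_subring])
  next
    case False
    then have "\<beta> j + 1 = p"
      using \<open>\<beta> j < p\<close> by simp
    \<comment> \<open>rewrite \<open>u j ^ p\<close> by the relation, which lowers the total degree\<close>
    then have "u_monomial \<beta> * u j = (\<Sum>k<n. s (A $$ (k, j)) * (u_monomial ?\<beta>\<^sub>0 * u k))"
      using \<beta>_split u_power_p[OF less.prems(2)]
      by (simp add: mult.assoc sum_distrib_left mult.left_commute flip: power_Suc2)
    moreover have "(\<Sum>i<n. ?\<beta>\<^sub>0 i) < (\<Sum>i<n. \<beta> i)"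
      using less.prems(2) \<open>\<beta> j + 1 = p\<close> p_ge_2
      by (simp add: sum.remove[of "{..<n}" j])
    ultimately show ?thesis
      using less.hyps[OF _ \<beta>\<^sub>0] A_in_R less.prems(2)
      by (auto intro!: ring_span_sum[OF alg_map_s R_subring] ring_span_scale[OF alg_map_s R_subring])
  qed
qed

inductive u_product :: "nat \<Rightarrow> 'h \<Rightarrow> bool" where
  one: "u_product 0 1"
| times_u: "u_product d x \<Longrightarrow> i < n \<Longrightarrow> u_product (Suc d) (x * u i)"

lemma u_product_u_monomial: "u_product (\<Sum>i<n. \<beta> i) (u_monomial \<beta>)"
proof -
  have power: "u_product (d + m) (x * u i ^ m)" if "u_product d x" "i < n" for d m x i
  proof (induction m)
    case (Suc m)
    from u_product.times_u[OF this that(2)] show ?case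
      by (simp add: mult_ac)
  qed (simp add: that(1))
  have "u_product (\<Sum>i<k. \<beta> i) (\<Prod>i<k. u i ^ \<beta> i)" if "k \<le> n" for k
    using that by (induction k) (auto intro: u_product.one power)
  then show ?thesis
    unfolding u_monomial_def by simp
qed

lemma u_product_in_H\<^sub>0: "u_product d x \<Longrightarrow> x \<in> H\<^sub>0"
proof (induction rule: u_product.induct)
  case one
  then show ?case
    using gen_alg.scal[of 1 R s] subring_one[OF R_subring] by (simp add: s_one)
qed (auto intro: gen_alg.intros)

lemma ring_span_reduced_monomials_mult:
  assumes "x \<in> ring_span s R reduced_monomials" "y \<in> ring_span s R reduced_monomials"
  shows "x * y \<in> ring_span s R reduced_monomials"
proof (rule ring_span_mult_closed[OF alg_map_s R_subring _ assms])
  have "x * w \<in> ring_span s R reduced_monomials"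
    if "u_product d w" "x \<in> ring_span s R reduced_monomials" for d w x
    using that
  proof (induction arbitrary: x rule: u_product.induct)
    case (times_u d w i)
    have "x * w * u i \<in> ring_span s R reduced_monomials"
      by (rule ring_span_mult_right[OF alg_map_s R_subring _ times_u.IH[OF times_u.prems]])
        (use u_monomial_times_u times_u.hyps(2) in \<open>auto simp: reduced_monomials_def\<close>)
    then show ?case
      by (simp add: mult.assoc)
  qed simp
  then show "a * b \<in> ring_span s R reduced_monomials"
    if "a \<in> reduced_monomials" "b \<in> reduced_monomials" for a b
    using that u_product_u_monomial ring_span_base[OF alg_map_s R_subring]
    unfolding reduced_monomials_def by blast
qed

lemma H\<^sub>0_eq_ring_span: "H\<^sub>0 = ring_span s R reduced_monomials"
proof
  show "H\<^sub>0 \<subseteq> ring_span s R reduced_monomials"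
  proof (rule gen_alg_least)
    show "s c \<in> ring_span s R reduced_monomials" if "c \<in> R" for c
      using ring_span_scale[OF alg_map_s R_subring that
          ring_span_base[OF alg_map_s R_subring one_in_reduced_monomials]] by simp
    show "u ` {..<n} \<subseteq> ring_span s R reduced_monomials"
      using u_in_reduced_monomials ring_span_base[OF alg_map_s R_subring] by auto
  qed (auto intro: ring_span.add ring_span_reduced_monomials_mult)
  show "ring_span s R reduced_monomials \<subseteq> H\<^sub>0"
  proof
    fix x assume "x \<in> ring_span s R reduced_monomials"
    then show "x \<in> H\<^sub>0"
    proof induction
      case zero
      then show ?case
        using gen_alg.scal[of 0 R s] subring_zero[OF R_subring] by (simp add: s_zero)
    next
      case (scale_base c y)
      then show ?case
        using u_product_in_H\<^sub>0[OF u_product_u_monomial]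
        unfolding reduced_monomials_def by (auto intro: gen_alg.intros)
    qed (rule gen_alg.add)
  qed
qed

lemma K_span_reduced_monomials: "K.span reduced_monomials = UNIV"
proof -
  have K_span_mult: "x * y \<in> K.span reduced_monomials"
    if "x \<in> K.span reduced_monomials" "y \<in> K.span reduced_monomials" for x y
  proof -
    have "x * y \<in> ring_span s UNIV reduced_monomials"
    proof (rule ring_span_mult_closed[OF alg_map_s is_subring_UNIV])
      fix a b assume "a \<in> reduced_monomials" "b \<in> reduced_monomials"
      then have "a * b \<in> ring_span s R reduced_monomials"
        by (intro ring_span_reduced_monomials_mult ring_span_base[OF alg_map_s R_subring])
      then show "a * b \<in> ring_span s UNIV reduced_monomials"
        by (rule ring_span_mono_scalars[rotated]) auto
    qed (use that ring_span_UNIV_eq_K_span in auto)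
    then show ?thesis
      using ring_span_UNIV_eq_K_span by simp
  qed
  have "t ` {..<n} \<subseteq> K.span reduced_monomials"
    using t_in_K_span_u K.span_mono[of "u ` {..<n}" reduced_monomials] u_in_reduced_monomials
    by blast
  then have "prim tp \<Delta> \<subseteq> K.span reduced_monomials"
    using prim_subset_K_span_t K.span_mono K.span_span by blast
  then have "gen_alg s UNIV (prim tp \<Delta>) \<subseteq> K.span reduced_monomials"
    by (intro gen_alg_least)
      (auto intro: K.span_add K_span_mult K.span_scale[OF K.span_base[OF one_in_reduced_monomials], simplified])
  then show ?thesis
    using prim_gen by auto
qed

lemma K_independent_reduced_monomials: "K.independent reduced_monomials"
  and card_reduced_monomials: "card reduced_monomials = p ^ n"
  using spanning_set_of_rank_card_independent[OF finite_reduced_monomials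
      K_span_reduced_monomials card_reduced_monomials_le] by auto

lemma inj_on_u_monomial: "inj_on u_monomial reduced_exponents"
  using card_reduced_monomials
  by (intro eq_card_imp_inj_on) (simp_all add: reduced_monomials_def reduced_exponents_def
      finite_PiE card_PiE)

lemma inj_on_u: "inj_on u {..<n}"
proof
  fix i j assume ij: "i \<in> {..<n}" "j \<in> {..<n}" "u i = u j"
  let ?e = "\<lambda>j. restrict (\<lambda>i. if i = j then 1 else 0 :: nat) {..<n}"
  have mem: "?e i \<in> reduced_exponents" "?e j \<in> reduced_exponents"
    using unit_exponent(1) ij(1,2) by simp_all
  have "u_monomial (?e i) = u_monomial (?e j)"
    using unit_exponent(2) ij by simp
  then have "?e i = ?e j"
    using inj_on_eq_iff[OF inj_on_u_monomial mem] by blast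
  then have "?e i i = ?e j i"
    by simp
  then show "i = j"
    using ij(1) by (auto split: if_splits)
qed

lemma scalar_in_H\<^sub>0: "c \<in> R \<Longrightarrow> s c \<in> H\<^sub>0"
  by (rule gen_alg.scal)

lemma one_in_H\<^sub>0: "1 \<in> H\<^sub>0" and zero_in_H\<^sub>0: "0 \<in> H\<^sub>0"
  using scalar_in_H\<^sub>0 subring_one[OF R_subring] subring_zero[OF R_subring] s_one s_zero by metis+

lemma u_in_H\<^sub>0: "i < n \<Longrightarrow> u i \<in> H\<^sub>0"
  by (rule gen_alg.gen) simp

lemma H\<^sub>0_scale: "c \<in> R \<Longrightarrow> x \<in> H\<^sub>0 \<Longrightarrow> s c * x \<in> H\<^sub>0"
  by (intro gen_alg.mult scalar_in_H\<^sub>0)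

lemma H\<^sub>0_diff: "x \<in> H\<^sub>0 \<Longrightarrow> y \<in> H\<^sub>0 \<Longrightarrow> x - y \<in> H\<^sub>0"
  using gen_alg.add[OF _ H\<^sub>0_scale[OF subring_uminus[OF R_subring subring_one[OF R_subring]]], of x y]
  by (simp add: s_uminus s_one)

lemma H\<^sub>0_sum: "(\<And>i. i \<in> F \<Longrightarrow> f i \<in> H\<^sub>0) \<Longrightarrow> sum f F \<in> H\<^sub>0"
  by (induction F rule: infinite_finite_induct) (auto intro: zero_in_H\<^sub>0 gen_alg.add)

lemma reduced_monomials_subset_H\<^sub>0: "reduced_monomials \<subseteq> H\<^sub>0"
  using H\<^sub>0_eq_ring_span ring_span_base[OF alg_map_s R_subring] by blast

lemma lin_indep_over_reduced_monomials:
  assumes "inj_on e I" "e ` I \<subseteq> reduced_monomials"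
  shows "lin_indep_over s C e I"
  unfolding lin_indep_over_def
proof (intro allI impI ballI)
  fix F c i assume F: "finite F \<and> F \<subseteq> I \<and> (\<forall>i\<in>F. c i \<in> C) \<and> (\<Sum>i\<in>F. s (c i) * e i) = 0"
    and i: "i \<in> F"
  have inj: "inj_on e F"
    using assms(1) F by (meson inj_on_subset)
  define c' where "c' y = c (the_inv_into F e y)" for y
  have "(\<Sum>y\<in>e ` F. s (c' y) * y) = (\<Sum>j\<in>F. s (c j) * e j)"
    by (simp add: sum.reindex[OF inj] c'_def the_inv_into_f_f[OF inj])
  then have sum0: "(\<Sum>y\<in>e ` F. s (c' y) * y) = (\<Sum>y\<in>e ` F. s ((\<lambda>_. 0) y) * y)"
    using F by (simp add: s_zero)
  have "c' (e i) = 0"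
    by (rule K_independent_coeffs_eq[OF K_independent_reduced_monomials _ _ sum0])
      (use F assms(2) i in auto)
  then show "c i = 0"
    by (simp add: c'_def the_inv_into_f_f[OF inj i])
qed

lemma H\<^sub>0_basis: "\<exists>(m::nat) e. basis_over s R e {..<m} H\<^sub>0"
proof -
  obtain e where e: "bij_betw e {..<card reduced_monomials} reduced_monomials"
    using ex_bij_betw_nat_finite[OF finite_reduced_monomials] by (auto simp: atLeast0LessThan)
  then have "basis_over s R e {..<card reduced_monomials} H\<^sub>0"
    unfolding basis_over_def bij_betw_def
    using lin_indep_over_reduced_monomials[of e] H\<^sub>0_eq_ring_span
      ring_span_eq_span_over[OF alg_map_s R_subring] by auto
  then show ?thesis
    by blast
qed

lemma K_span_H\<^sub>0: "span_over s UNIV H\<^sub>0 = UNIV"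
  using K.span_mono[OF reduced_monomials_subset_H\<^sub>0] K_span_reduced_monomials
  by (auto simp: K_span_eq_span_over)

abbreviation "H\<^sub>0_tensor \<equiv> {tp a b | a b. a \<in> H\<^sub>0 \<and> b \<in> H\<^sub>0}"

lemma comult_scalar: "\<Delta> (s c) = sh c"
  using comult_scale[of c 1] by (simp add: comult_one)

lemma H\<^sub>0_tensor_mult: "g \<in> H\<^sub>0_tensor \<Longrightarrow> g' \<in> H\<^sub>0_tensor \<Longrightarrow> g * g' \<in> H\<^sub>0_tensor"
  by (auto simp: tp_mult) (blast intro: gen_alg.mult)

lemma comult_H\<^sub>0: "x \<in> H\<^sub>0 \<Longrightarrow> \<Delta> x \<in> ring_span sh R H\<^sub>0_tensor"
proof -
  note span_base = ring_span_base[OF alg_map_sh R_subring]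
  have "H\<^sub>0 \<subseteq> {x. \<Delta> x \<in> ring_span sh R H\<^sub>0_tensor}"
  proof (rule gen_alg_least)
    show "s c \<in> {x. \<Delta> x \<in> ring_span sh R H\<^sub>0_tensor}" if "c \<in> R" for c
    proof -
      have "tp 1 1 \<in> H\<^sub>0_tensor"
        using one_in_H\<^sub>0 by blast
      then have "sh c * tp 1 1 \<in> ring_span sh R H\<^sub>0_tensor"
        by (rule ring_span.scale_base[OF that])
      then show ?thesis
        by (simp add: comult_scalar tp_one)
    qed
    show "u ` {..<n} \<subseteq> {x. \<Delta> x \<in> ring_span sh R H\<^sub>0_tensor}"
      using u_prim u_in_H\<^sub>0 one_in_H\<^sub>0 by (fastforce simp: prim_def intro: ring_span.add span_base)
    show "x * y \<in> {x. \<Delta> x \<in> ring_span sh R H\<^sub>0_tensor}"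
      if "x \<in> {x. \<Delta> x \<in> ring_span sh R H\<^sub>0_tensor}" "y \<in> {x. \<Delta> x \<in> ring_span sh R H\<^sub>0_tensor}"
      for x y
      unfolding mem_Collect_eq comult_mult
      by (rule ring_span_mult_closed[OF alg_map_sh R_subring span_base[OF H\<^sub>0_tensor_mult]])
        (use that in auto)
  qed (auto simp: comult_add intro: ring_span.add)
  then show "x \<in> H\<^sub>0 \<Longrightarrow> \<Delta> x \<in> ring_span sh R H\<^sub>0_tensor"
    by blast
qed

lemma counit_H\<^sub>0: "x \<in> H\<^sub>0 \<Longrightarrow> \<epsilon> x \<in> R"
proof -
  have "H\<^sub>0 \<subseteq> {x. \<epsilon> x \<in> R}"
  proof (rule gen_alg_least)
    show "s c \<in> {x. \<epsilon> x \<in> R}" if "c \<in> R" for c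
      using that counit_scale[of c 1] by (simp add: counit_one)
    show "u ` {..<n} \<subseteq> {x. \<epsilon> x \<in> R}"
      using counit_prim[OF u_prim] subring_zero[OF R_subring] by auto
  qed (auto simp: counit_add counit_mult intro: subring_add[OF R_subring] subring_mult[OF R_subring])
  then show "x \<in> H\<^sub>0 \<Longrightarrow> \<epsilon> x \<in> R"
    by blast
qed

definition lower_tensors :: "nat \<Rightarrow> 'hh set" where
  "lower_tensors d = {tp a b | a b. (\<exists>k<d. u_product k a) \<and> b \<in> H\<^sub>0}"

lemma comult_u_product:
  "u_product d x \<Longrightarrow> \<Delta> x - tp x 1 \<in> ring_span sh R (lower_tensors d)"
proof (induction rule: u_product.induct)
  case one
  then show ?case
    by (simp add: comult_one tp_one ring_span.zero)
next
  case (times_u d x i)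
  note span_base = ring_span_base[OF alg_map_sh R_subring]
  define z where "z = \<Delta> x - tp x 1"
  have "\<Delta> (x * u i) - tp (x * u i) 1 = tp x (u i) + z * tp (u i) 1 + z * tp 1 (u i)"
    using u_prim[of i] by (simp add: prim_def z_def comult_mult algebra_simps tp_mult)
  moreover have "tp x (u i) \<in> lower_tensors (Suc d)"
    using times_u u_in_H\<^sub>0 unfolding lower_tensors_def by blast
  moreover have "z * tp (u i) 1 \<in> ring_span sh R (lower_tensors (Suc d))"
  proof (rule ring_span_mult_right[OF alg_map_sh R_subring _ times_u.IH[folded z_def]])
    fix g assume "g \<in> lower_tensors d"
    then obtain a b k where g: "g = tp a b" "k < d" "u_product k a" "b \<in> H\<^sub>0"
      unfolding lower_tensors_def by blast
    have "tp (a * u i) b \<in> lower_tensors (Suc d)"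
      unfolding lower_tensors_def using g u_product.times_u[OF g(3) times_u.hyps(2)] by blast
    then show "g * tp (u i) 1 \<in> ring_span sh R (lower_tensors (Suc d))"
      by (simp add: g(1) tp_mult span_base)
  qed
  moreover have "z * tp 1 (u i) \<in> ring_span sh R (lower_tensors (Suc d))"
  proof (rule ring_span_mult_right[OF alg_map_sh R_subring _ times_u.IH[folded z_def]])
    fix g assume "g \<in> lower_tensors d"
    then obtain a b k where g: "g = tp a b" "k < d" "u_product k a" "b \<in> H\<^sub>0"
      unfolding lower_tensors_def by blast
    have "tp a (b * u i) \<in> lower_tensors (Suc d)"
      unfolding lower_tensors_def using g gen_alg.mult[OF g(4) u_in_H\<^sub>0[OF times_u.hyps(2)]] less_SucI
      by blast
    then show "g * tp 1 (u i) \<in> ring_span sh R (lower_tensors (Suc d))"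
      by (simp add: g(1) tp_mult span_base)
  qed
  ultimately show ?case
    by (auto intro: ring_span.add span_base)
qed

text \<open>Applying \<open>m \<circ> (S \<otimes> id)\<close> to \<open>\<Delta> x\<close> gives \<open>S x = \<epsilon> x - m (S \<otimes> id) (\<Delta> x - x \<otimes> 1)\<close>,
  whose right-hand side only involves \<open>S\<close> of shorter products.\<close>

lemma antipode_u_product: "u_product d x \<Longrightarrow> S x \<in> H\<^sub>0"
proof (induction d arbitrary: x rule: less_induct)
  case (less d)
  obtain L where L: "klinear sh s L" "\<forall>x y. L (tp x y) = S x * y" "\<forall>x. L (\<Delta> x) = s (\<epsilon> x)"
    using antipode_law by blast
  have L_add: "L (a + b) = L a + L b" and L_scale: "L (sh c * a) = s c * L a" for a b c
    using L(1) unfolding klinear_def by blast+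
  define z where "z = \<Delta> x - tp x 1"
  have "z \<in> ring_span sh R (lower_tensors d)"
    unfolding z_def by (rule comult_u_product[OF less.prems])
  then have Lz: "L z \<in> H\<^sub>0"
  proof induction
    case zero
    then show ?case
      using L_add[of 0 0] zero_in_H\<^sub>0 by simp
  next
    case (scale_base c g)
    then obtain a b k where "g = tp a b" "k < d" "u_product k a" "b \<in> H\<^sub>0"
      unfolding lower_tensors_def by blast
    then show ?case
      using scale_base(1) less.IH L(2) by (simp add: L_scale H\<^sub>0_scale gen_alg.mult)
  qed (simp add: L_add gen_alg.add)
  have "S x = L (\<Delta> x) - L z"
    using L_add[of "tp x 1" z] L(2) unfolding z_def by simp
  then show ?case
    using L(3) H\<^sub>0_diff[OF scalar_in_H\<^sub>0[OF counit_H\<^sub>0[OF u_product_in_H\<^sub>0[OF less.prems]]] Lz]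
    by simp
qed

lemma antipode_H\<^sub>0:
  assumes "x \<in> H\<^sub>0"
  shows "S x \<in> H\<^sub>0"
proof -
  have "x \<in> ring_span s R reduced_monomials"
    using assms H\<^sub>0_eq_ring_span by simp
  then show ?thesis
  proof induction
    case zero
    then show ?case
      using antipode_scale[of 0 0] zero_in_H\<^sub>0 by (simp add: s_zero)
  next
    case (scale_base c y)
    then show ?case
      using antipode_u_product[OF u_product_u_monomial]
      by (auto simp: reduced_monomials_def antipode_scale H\<^sub>0_scale)
  qed (simp add: antipode_add gen_alg.add)
qed

lemma hopf_order_H\<^sub>0: "hopf_order s sh tp \<Delta> \<epsilon> S R H\<^sub>0"
  unfolding hopf_order_def
  using one_in_H\<^sub>0 H\<^sub>0_basis K_span_H\<^sub>0 H\<^sub>0_scale counit_H\<^sub>0 antipode_H\<^sub>0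
    comult_H\<^sub>0[unfolded ring_span_eq_span_over[OF alg_map_sh R_subring]]
  by (auto intro: gen_alg.add gen_alg.mult)

lemma u_coords_in_R:
  assumes x: "x \<in> H\<^sub>0" "x = (\<Sum>k<n. s (c k) * u k)" and k: "k < n"
  shows "c k \<in> R"
proof -
  obtain F d where F: "finite F" "F \<subseteq> reduced_monomials" "\<forall>y\<in>F. d y \<in> R"
    "x = (\<Sum>y\<in>F. s (d y) * y)"
    using x(1) unfolding H\<^sub>0_eq_ring_span ring_span_eq_span_over[OF alg_map_s R_subring]
      span_over_def by blast
  let ?U = "u ` {..<n}"
  define c' where "c' y = (if y \<in> ?U then c (the_inv_into {..<n} u y) else 0)" for y
  define d' where "d' y = (if y \<in> F then d y else 0)" for y
  have "x = (\<Sum>y\<in>?U. s (c (the_inv_into {..<n} u y)) * y)"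
    unfolding x(2) by (simp add: sum.reindex[OF inj_on_u] the_inv_into_f_f[OF inj_on_u])
  also have "\<dots> = (\<Sum>y\<in>F \<union> ?U. s (c' y) * y)"
    using F(1) by (intro sum.mono_neutral_cong_left) (auto simp: c'_def s_zero)
  finally have x_c': "x = (\<Sum>y\<in>F \<union> ?U. s (c' y) * y)" .
  have x_d': "x = (\<Sum>y\<in>F \<union> ?U. s (d' y) * y)"
    unfolding F(4) using F(1) by (intro sum.mono_neutral_cong_left) (auto simp: d'_def s_zero)
  have "d' (u k) = c' (u k)"
    by (rule K_independent_coeffs_eq[OF K_independent_reduced_monomials, of "F \<union> ?U"])
      (use F u_in_reduced_monomials x_c' x_d' k in auto)
  moreover have "c' (u k) = c k"
    using k by (simp add: c'_def the_inv_into_f_f[OF inj_on_u])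
  moreover have "d' (u k) \<in> R"
    using F(3) subring_zero[OF R_subring] by (simp add: d'_def)
  ultimately show ?thesis
    by simp
qed

end

definition eval_monom :: "(nat \<Rightarrow> 'a::comm_ring_1) \<Rightarrow> (nat \<Rightarrow>\<^sub>0 nat) \<Rightarrow> 'a" where
  "eval_monom x m = (\<Prod>i\<in>Poly_Mapping.keys m. x i ^ Poly_Mapping.lookup m i)"

lemma eval_mpoly_eq_sum:
  "eval_mpoly sc x P = (\<Sum>m\<in>Poly_Mapping.keys P. sc (Poly_Mapping.lookup P m) * eval_monom x m)"
  unfolding eval_mpoly_def eval_monom_def ..

lemma eval_monom_superset:
  assumes "finite K" "Poly_Mapping.keys m \<subseteq> K"
  shows "eval_monom x m = (\<Prod>i\<in>K. x i ^ Poly_Mapping.lookup m i)"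
  unfolding eval_monom_def using assms
  by (intro prod.mono_neutral_left) (auto simp: in_keys_iff)

lemma eval_monom_add: "eval_monom x (a + b) = eval_monom x a * eval_monom x b"
proof -
  let ?K = "Poly_Mapping.keys a \<union> Poly_Mapping.keys b"
  have "eval_monom x (a + b) = (\<Prod>i\<in>?K. x i ^ Poly_Mapping.lookup (a + b) i)"
    by (rule eval_monom_superset) (auto simp: keys_add)
  also have "\<dots> = (\<Prod>i\<in>?K. x i ^ Poly_Mapping.lookup a i) * (\<Prod>i\<in>?K. x i ^ Poly_Mapping.lookup b i)"
    by (simp add: lookup_add power_add prod.distrib)
  also have "\<dots> = eval_monom x a * eval_monom x b"
    by (simp add: eval_monom_superset[symmetric])
  finally show ?thesis .
qed

lemma eval_monom_zero: "eval_monom x 0 = 1"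
  by (simp add: eval_monom_def)

lemma eval_monom_single: "eval_monom x (Poly_Mapping.single i k) = x i ^ k"
  by (simp add: eval_monom_def)

lemma update_eq_add_single:
  "k \<notin> Poly_Mapping.keys f \<Longrightarrow> Poly_Mapping.update k b f = f + Poly_Mapping.single k b"
  by (rule poly_mapping_eqI) (auto simp: lookup_update lookup_add lookup_single in_keys_iff when_def)

lemma var_power: "var i ^ k = Poly_Mapping.single (Poly_Mapping.single i k) (1::'k::comm_ring_1)"
proof (induction k)
  case (Suc k)
  have "var i ^ Suc k = Poly_Mapping.single (Poly_Mapping.single i k) (1::'k) * var i"
    by (simp add: Suc power_Suc2)
  also have "\<dots> = Poly_Mapping.single (Poly_Mapping.single i k + Poly_Mapping.single i 1) 1"
    unfolding var_def by (simp add: mult_single)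
  finally show ?case
    by (simp flip: single_add)
qed simp

lemma const_mult_var: "const a * var j = Poly_Mapping.single (Poly_Mapping.single j 1) a"
  unfolding const_def var_def by (simp add: mult_single)

lemma poly_mapping_sum_singles:
  "P = (\<Sum>m\<in>Poly_Mapping.keys P. Poly_Mapping.single m (Poly_Mapping.lookup P m))"
proof (rule poly_mapping_eqI)
  fix k
  have "Poly_Mapping.lookup (\<Sum>m\<in>Poly_Mapping.keys P. Poly_Mapping.single m (Poly_Mapping.lookup P m)) k
      = (\<Sum>m\<in>Poly_Mapping.keys P. if m = k then Poly_Mapping.lookup P m else 0)"
    by (simp add: lookup_sum lookup_single when_def)
  also have "\<dots> = Poly_Mapping.lookup P k"
    by (simp add: in_keys_iff)
  finally show "Poly_Mapping.lookup P k =
      Poly_Mapping.lookup (\<Sum>m\<in>Poly_Mapping.keys P. Poly_Mapping.single m (Poly_Mapping.lookup P m)) k"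
    ..
qed

lemma inj_on_restrict_lookup:
  "inj_on (\<lambda>m. restrict (Poly_Mapping.lookup m) K) {m. Poly_Mapping.keys m \<subseteq> K}"
proof
  fix m m' assume m: "m \<in> {m. Poly_Mapping.keys m \<subseteq> K}" "m' \<in> {m. Poly_Mapping.keys m \<subseteq> K}"
    and eq: "restrict (Poly_Mapping.lookup m) K = restrict (Poly_Mapping.lookup m') K"
  show "m = m'"
  proof (rule poly_mapping_eqI)
    fix i
    show "Poly_Mapping.lookup m i = Poly_Mapping.lookup m' i"
    proof (cases "i \<in> K")
      case False
      then have "i \<notin> Poly_Mapping.keys m" "i \<notin> Poly_Mapping.keys m'"
        using m by auto
      then show ?thesis
        by (simp add: in_keys_iff)
    qed (use fun_cong[OF eq, of i] in simp)
  qed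
qed

context
  fixes sc :: "'k::field \<Rightarrow> 'a::comm_ring_1"
  assumes sc: "alg_map sc"
begin

lemma eval_mpoly_superset:
  assumes "finite K" "Poly_Mapping.keys P \<subseteq> K"
  shows "eval_mpoly sc x P = (\<Sum>m\<in>K. sc (Poly_Mapping.lookup P m) * eval_monom x m)"
  unfolding eval_mpoly_eq_sum using assms
  by (intro sum.mono_neutral_left) (auto simp: in_keys_iff alg_map_zero[OF sc])

lemma eval_mpoly_zero: "eval_mpoly sc x 0 = 0"
  by (simp add: eval_mpoly_def)

lemma eval_mpoly_add: "eval_mpoly sc x (P + Q) = eval_mpoly sc x P + eval_mpoly sc x Q"
proof -
  let ?K = "Poly_Mapping.keys P \<union> Poly_Mapping.keys Q"
  have "eval_mpoly sc x (P + Q) = (\<Sum>m\<in>?K. sc (Poly_Mapping.lookup (P + Q) m) * eval_monom x m)"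
    by (rule eval_mpoly_superset) (auto simp: keys_add)
  also have "\<dots> = (\<Sum>m\<in>?K. sc (Poly_Mapping.lookup P m) * eval_monom x m)
                  + (\<Sum>m\<in>?K. sc (Poly_Mapping.lookup Q m) * eval_monom x m)"
    by (simp add: lookup_add alg_map_add[OF sc] distrib_right sum.distrib)
  also have "\<dots> = eval_mpoly sc x P + eval_mpoly sc x Q"
    by (simp add: eval_mpoly_superset[symmetric])
  finally show ?thesis .
qed

lemma eval_mpoly_single: "eval_mpoly sc x (Poly_Mapping.single m c) = sc c * eval_monom x m"
  by (cases "c = 0") (simp_all add: eval_mpoly_eq_sum alg_map_zero[OF sc])

lemma eval_mpoly_single_mult:
  "eval_mpoly sc x (Poly_Mapping.single a b * Q) = sc b * eval_monom x a * eval_mpoly sc x Q"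
proof (induction Q rule: update_induct)
  case const
  then show ?case
    by (simp add: eval_mpoly_zero)
next
  case (update f c d)
  then show ?case
    by (simp add: update_eq_add_single distrib_left mult_single eval_mpoly_add eval_mpoly_single
        alg_map_mult[OF sc] eval_monom_add algebra_simps)
qed

lemma eval_mpoly_mult: "eval_mpoly sc x (P * Q) = eval_mpoly sc x P * eval_mpoly sc x Q"
proof (induction P rule: update_induct)
  case const
  then show ?case
    by (simp add: eval_mpoly_zero)
next
  case (update f a b)
  then show ?case
    by (simp add: update_eq_add_single distrib_right eval_mpoly_add eval_mpoly_single_mult
        eval_mpoly_single)
qed

lemma eval_mpoly_one: "eval_mpoly sc x 1 = 1"
  using eval_mpoly_single[of x 0 1] by (simp add: alg_map_one[OF sc] eval_monom_zero)

lemma eval_mpoly_diff: "eval_mpoly sc x (P - Q) = eval_mpoly sc x P - eval_mpoly sc x Q"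
  using eval_mpoly_add[of x "P - Q" Q] by (simp add: algebra_simps)

lemma eval_mpoly_sum: "eval_mpoly sc x (sum f F) = (\<Sum>i\<in>F. eval_mpoly sc x (f i))"
  by (induction F rule: infinite_finite_induct) (auto simp: eval_mpoly_zero eval_mpoly_add)

lemma eval_mpoly_power: "eval_mpoly sc x (P ^ k) = eval_mpoly sc x P ^ k"
  by (induction k) (auto simp: eval_mpoly_one eval_mpoly_mult)

lemma eval_mpoly_var: "eval_mpoly sc x (var i) = x i"
  unfolding var_def by (simp add: eval_mpoly_single alg_map_one[OF sc] eval_monom_single)

lemma eval_mpoly_const: "eval_mpoly sc x (const c) = sc c"
  unfolding const_def by (simp add: eval_mpoly_single eval_monom_zero)

end

lemma mem_polys_over_iff:
  "P \<in> polys_over C n \<longleftrightarrow>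
     (\<forall>m. Poly_Mapping.lookup P m \<in> C) \<and> (\<forall>m\<in>Poly_Mapping.keys P. Poly_Mapping.keys m \<subseteq> {..<n})"
  by (simp add: polys_over_def)

context
  fixes C :: "'k::comm_ring_1 set" and n :: nat
  assumes C: "is_subring C"
begin

lemma polys_over_zero: "0 \<in> polys_over C n"
  using subring_zero[OF C] by (simp add: mem_polys_over_iff)

lemma polys_over_add: "P \<in> polys_over C n \<Longrightarrow> Q \<in> polys_over C n \<Longrightarrow> P + Q \<in> polys_over C n"
  using keys_add[of P Q] subring_add[OF C] by (fastforce simp: mem_polys_over_iff lookup_add)

lemma polys_over_single:
  "c \<in> C \<Longrightarrow> Poly_Mapping.keys m \<subseteq> {..<n} \<Longrightarrow> Poly_Mapping.single m c \<in> polys_over C n"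
  using subring_zero[OF C] by (auto simp: mem_polys_over_iff lookup_single when_def)

lemma polys_over_update_split:
  assumes "Poly_Mapping.update a b f \<in> polys_over C n" "a \<notin> Poly_Mapping.keys f" "b \<noteq> 0"
  shows "f \<in> polys_over C n" "Poly_Mapping.single a b \<in> polys_over C n"
proof -
  have lookup: "Poly_Mapping.lookup (Poly_Mapping.update a b f) m =
      (if a = m then b else Poly_Mapping.lookup f m)" for m
    by (simp add: lookup_update)
  have keys: "Poly_Mapping.keys (Poly_Mapping.update a b f) = insert a (Poly_Mapping.keys f)"
    using assms(3) by (simp add: keys_update)
  show "f \<in> polys_over C n"
    unfolding mem_polys_over_iff
  proof (intro conjI allI ballI)
    show "Poly_Mapping.lookup f m \<in> C" for m
      using assms(1,2) lookup[of m] subring_zero[OF C]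
      unfolding mem_polys_over_iff by (metis in_keys_iff)
    show "Poly_Mapping.keys m \<subseteq> {..<n}" if "m \<in> Poly_Mapping.keys f" for m
      using assms(1) keys that unfolding mem_polys_over_iff by auto
  qed
  have "b \<in> C"
    using assms(1) lookup[of a] unfolding mem_polys_over_iff by metis
  moreover have "Poly_Mapping.keys a \<subseteq> {..<n}"
    using assms(1) keys unfolding mem_polys_over_iff by auto
  ultimately show "Poly_Mapping.single a b \<in> polys_over C n"
    by (rule polys_over_single)
qed

lemma polys_over_single_mult:
  assumes "Poly_Mapping.single a b \<in> polys_over C n" "Q \<in> polys_over C n"
  shows "Poly_Mapping.single a b * Q \<in> polys_over C n"
  using assms(2)
proof (induction Q rule: update_induct)
  case const
  then show ?case
    by (simp add: polys_over_zero)
next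
  case (update f c d)
  have f: "f \<in> polys_over C n" and single: "Poly_Mapping.single c d \<in> polys_over C n"
    using polys_over_update_split[OF update.prems update.hyps] by auto
  have "Poly_Mapping.single a b * Poly_Mapping.single c d \<in> polys_over C n"
  proof (cases "b = 0 \<or> d = 0")
    case False
    then have "b \<in> C" "d \<in> C" "Poly_Mapping.keys a \<subseteq> {..<n}" "Poly_Mapping.keys c \<subseteq> {..<n}"
      using assms(1) single unfolding mem_polys_over_iff
      by (metis lookup_single_eq, metis lookup_single_eq, auto)
    then show ?thesis
      unfolding mult_single using keys_add[of a c]
      by (intro polys_over_single subring_mult[OF C]) auto
  qed (auto simp: polys_over_zero)
  then show ?case
    using update.IH[OF f] update.hyps by (simp add: update_eq_add_single distrib_left polys_over_add)
qed

lemma polys_over_mult: "P \<in> polys_over C n \<Longrightarrow> Q \<in> polys_over C n \<Longrightarrow> P * Q \<in> polys_over C n"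
proof (induction P rule: update_induct)
  case const
  then show ?case
    by (simp add: polys_over_zero)
next
  case (update f a b)
  have f: "f \<in> polys_over C n" and single: "Poly_Mapping.single a b \<in> polys_over C n"
    using polys_over_update_split[OF update.prems(1) update.hyps] by auto
  show ?case
    using update.IH[OF f update.prems(2)] polys_over_single_mult[OF single update.prems(2)] update.hyps
    by (simp add: update_eq_add_single distrib_right polys_over_add)
qed

lemma polys_over_diff: "P \<in> polys_over C n \<Longrightarrow> Q \<in> polys_over C n \<Longrightarrow> P - Q \<in> polys_over C n"
  using polys_over_add[of P "- Q"] subring_uminus[OF C] by (simp add: mem_polys_over_iff)

lemma polys_over_sum: "(\<And>i. i \<in> F \<Longrightarrow> f i \<in> polys_over C n) \<Longrightarrow> sum f F \<in> polys_over C n"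
  by (induction F rule: infinite_finite_induct) (auto intro: polys_over_zero polys_over_add)

lemma polys_over_power: "P \<in> polys_over C n \<Longrightarrow> P ^ k \<in> polys_over C n"
  using polys_over_single[of 1 0] subring_one[OF C]
  by (induction k) (auto intro: polys_over_mult)

lemma polys_over_var: "i < n \<Longrightarrow> var i \<in> polys_over C n"
  unfolding var_def using subring_one[OF C] by (intro polys_over_single) auto

lemma polys_over_const: "c \<in> C \<Longrightarrow> const c \<in> polys_over C n"
  unfolding const_def by (intro polys_over_single) auto

lemma ideal_gen_zero: "0 \<in> ideal_gen C n f"
  unfolding ideal_gen_def using polys_over_zero by (intro CollectI exI[of _ "\<lambda>_. 0"]) auto

lemma ideal_gen_add: "P \<in> ideal_gen C n f \<Longrightarrow> Q \<in> ideal_gen C n f \<Longrightarrow> P + Q \<in> ideal_gen C n f"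
proof -
  assume "P \<in> ideal_gen C n f" "Q \<in> ideal_gen C n f"
  then obtain g g' where g: "P = (\<Sum>i<n. g i * f i)" "\<forall>i<n. g i \<in> polys_over C n"
    and g': "Q = (\<Sum>i<n. g' i * f i)" "\<forall>i<n. g' i \<in> polys_over C n"
    unfolding ideal_gen_def by blast
  have "P + Q = (\<Sum>i<n. (g i + g' i) * f i)"
    unfolding g g' by (simp add: distrib_right sum.distrib)
  moreover have "\<forall>i<n. g i + g' i \<in> polys_over C n"
    using g g' polys_over_add by blast
  ultimately show ?thesis
    unfolding ideal_gen_def by (intro CollectI exI[of _ "\<lambda>i. g i + g' i"]) simp
qed

lemma ideal_gen_mult_generator: "q \<in> polys_over C n \<Longrightarrow> i < n \<Longrightarrow> q * f i \<in> ideal_gen C n f"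
proof -
  assume q: "q \<in> polys_over C n" and i: "i < n"
  have "q * f i = (\<Sum>k<n. (if k = i then q else 0) * f k)"
    using i by (simp add: if_distrib[of "\<lambda>g. g * _"] cong: if_cong)
  moreover have "\<forall>k<n. (if k = i then q else 0) \<in> polys_over C n"
    using q polys_over_zero by auto
  ultimately show ?thesis
    unfolding ideal_gen_def by (intro CollectI exI[of _ "\<lambda>k. if k = i then q else 0"]) simp
qed

lemma ideal_gen_subset_polys:
  "(\<And>i. i < n \<Longrightarrow> f i \<in> polys_over C n) \<Longrightarrow> P \<in> ideal_gen C n f \<Longrightarrow> P \<in> polys_over C n"
  unfolding ideal_gen_def by (auto intro!: polys_over_sum polys_over_mult)

end

section \<open>The presentation of \<open>H\<^sub>0\<close>\<close>

context theta_order
begin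

abbreviation "rel_ideal \<equiv> ideal_gen R n (rel_polys p n A)"

lemma rel_polys_in_polys_over: "i < n \<Longrightarrow> rel_polys p n A i \<in> polys_over R n"
  unfolding rel_polys_def
  by (intro polys_over_diff[OF R_subring] polys_over_power[OF R_subring]
      polys_over_var[OF R_subring] polys_over_sum[OF R_subring] polys_over_mult[OF R_subring]
      polys_over_const[OF R_subring])
    (auto intro: A_in_R)

lemma eval_rel_polys: "i < n \<Longrightarrow> eval_mpoly s u (rel_polys p n A i) = 0"
  unfolding rel_polys_def
  by (simp add: alg_map_s eval_mpoly_diff eval_mpoly_power eval_mpoly_var eval_mpoly_sum
      eval_mpoly_mult eval_mpoly_const u_power_p)

lemma rel_ideal_subset_kernel:
  assumes "P \<in> rel_ideal"
  shows "P \<in> polys_over R n" "eval_mpoly s u P = 0"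
proof -
  show "P \<in> polys_over R n"
    by (rule ideal_gen_subset_polys[OF R_subring rel_polys_in_polys_over assms])
  obtain g where "P = (\<Sum>i<n. g i * rel_polys p n A i)"
    using assms unfolding ideal_gen_def by blast
  then show "eval_mpoly s u P = 0"
    by (simp add: alg_map_s eval_mpoly_sum eval_mpoly_mult eval_rel_polys)
qed

lemma H\<^sub>0_prod: "(\<And>i. i \<in> F \<Longrightarrow> f i \<in> H\<^sub>0) \<Longrightarrow> prod f F \<in> H\<^sub>0"
  by (induction F rule: infinite_finite_induct) (auto intro: one_in_H\<^sub>0 gen_alg.mult)

lemma eval_image: "eval_mpoly s u ` polys_over R n = H\<^sub>0"
proof
  show "eval_mpoly s u ` polys_over R n \<subseteq> H\<^sub>0"
  proof clarify
    fix P assume P: "P \<in> polys_over R n"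
    have "eval_monom u m \<in> H\<^sub>0" if "m \<in> Poly_Mapping.keys P" for m
    proof -
      have "u i ^ k \<in> H\<^sub>0" if "i \<in> Poly_Mapping.keys m" for i k
      proof -
        have "i < n"
          using P \<open>m \<in> Poly_Mapping.keys P\<close> that by (auto simp: mem_polys_over_iff)
        then show ?thesis
          by (induction k) (auto intro: one_in_H\<^sub>0 gen_alg.mult u_in_H\<^sub>0)
      qed
      then show ?thesis
        unfolding eval_monom_def by (rule H\<^sub>0_prod)
    qed
    then show "eval_mpoly s u P \<in> H\<^sub>0"
      using P unfolding eval_mpoly_eq_sum
      by (auto simp: mem_polys_over_iff intro!: H\<^sub>0_sum gen_alg.mult scalar_in_H\<^sub>0)
  qed
  show "H\<^sub>0 \<subseteq> eval_mpoly s u ` polys_over R n"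
  proof (rule gen_alg_least)
    show "s c \<in> eval_mpoly s u ` polys_over R n" if "c \<in> R" for c
      using polys_over_const[OF R_subring that] by (rule rev_image_eqI) (simp add: alg_map_s eval_mpoly_const)
    show "u ` {..<n} \<subseteq> eval_mpoly s u ` polys_over R n"
      using polys_over_var[OF R_subring] eval_mpoly_var[OF alg_map_s] by (auto intro!: rev_image_eqI)
  next
    fix x y assume "x \<in> eval_mpoly s u ` polys_over R n" "y \<in> eval_mpoly s u ` polys_over R n"
    then obtain P Q where "P \<in> polys_over R n" "Q \<in> polys_over R n"
      and "x = eval_mpoly s u P" "y = eval_mpoly s u Q"
      by blast
    then show "x + y \<in> eval_mpoly s u ` polys_over R n" "x * y \<in> eval_mpoly s u ` polys_over R n"
      using rev_image_eqI[of "P + Q" _ _ "eval_mpoly s u"] rev_image_eqI[of "P * Q" _ _ "eval_mpoly s u"]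
      by (simp_all add: alg_map_s eval_mpoly_add eval_mpoly_mult
          polys_over_add[OF R_subring] polys_over_mult[OF R_subring])
  qed
qed

definition reduced_polys :: "'k mpoly set" where
  "reduced_polys = {r \<in> polys_over R n. \<forall>m\<in>Poly_Mapping.keys r. \<forall>i. Poly_Mapping.lookup m i < p}"

lemma reduced_polys_add: "r \<in> reduced_polys \<Longrightarrow> r' \<in> reduced_polys \<Longrightarrow> r + r' \<in> reduced_polys"
  using keys_add[of r r'] by (auto simp: reduced_polys_def intro!: polys_over_add[OF R_subring])

lemma reduced_polys_zero: "0 \<in> reduced_polys"
  by (simp add: reduced_polys_def polys_over_zero[OF R_subring])

lemma eval_monom_u:
  assumes "Poly_Mapping.keys m \<subseteq> {..<n}"
  shows "eval_monom u m = u_monomial (restrict (Poly_Mapping.lookup m) {..<n})"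
  unfolding eval_monom_superset[OF finite_lessThan assms] u_monomial_def by simp

lemma reduced_poly_eval_eq_0:
  assumes r: "r \<in> reduced_polys" and eval: "eval_mpoly s u r = 0"
  shows "r = 0"
proof -
  define \<psi> where "\<psi> m = u_monomial (restrict (Poly_Mapping.lookup m) {..<n})" for m
  have keys: "Poly_Mapping.keys m \<subseteq> {..<n}" "restrict (Poly_Mapping.lookup m) {..<n} \<in> reduced_exponents"
    if "m \<in> Poly_Mapping.keys r" for m
    using r that by (auto simp: reduced_polys_def mem_polys_over_iff reduced_exponents_def)
  have "inj_on (\<lambda>m. restrict (Poly_Mapping.lookup m) {..<n}) (Poly_Mapping.keys r)"
    by (rule inj_on_subset[OF inj_on_restrict_lookup]) (use keys in blast)
  moreover have "inj_on u_monomial ((\<lambda>m. restrict (Poly_Mapping.lookup m) {..<n}) ` Poly_Mapping.keys r)"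
    by (rule inj_on_subset[OF inj_on_u_monomial]) (use keys in blast)
  ultimately have inj: "inj_on \<psi> (Poly_Mapping.keys r)"
    unfolding \<psi>_def using comp_inj_on by (fastforce simp: o_def)
  define c where "c y = Poly_Mapping.lookup r (the_inv_into (Poly_Mapping.keys r) \<psi> y)" for y
  have coeff: "c (\<psi> m) = Poly_Mapping.lookup r m" and monom: "\<psi> m = eval_monom u m"
    if "m \<in> Poly_Mapping.keys r" for m
    using that by (simp_all only: c_def the_inv_into_f_f[OF inj]) (simp add: \<psi>_def eval_monom_u keys)
  have "(\<Sum>y\<in>\<psi> ` Poly_Mapping.keys r. s (c y) * y) = eval_mpoly s u r"
    unfolding sum.reindex[OF inj] eval_mpoly_eq_sum by (rule sum.cong) (simp_all add: coeff flip: monom)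
  also have "\<dots> = (\<Sum>y\<in>\<psi> ` Poly_Mapping.keys r. s ((\<lambda>_. 0) y) * y)"
    using eval by (simp add: s_zero)
  finally have sum0: "(\<Sum>y\<in>\<psi> ` Poly_Mapping.keys r. s (c y) * y) = (\<Sum>y\<in>\<psi> ` Poly_Mapping.keys r. s ((\<lambda>_. 0) y) * y)" .
  have "c (\<psi> m) = 0" if "m \<in> Poly_Mapping.keys r" for m
    by (rule K_independent_coeffs_eq[OF K_independent_reduced_monomials _ _ sum0])
      (use keys that in \<open>auto simp: \<psi>_def reduced_monomials_def\<close>)
  then have "Poly_Mapping.lookup r m = 0" for m
    using coeff by (metis in_keys_iff)
  then show ?thesis
    by (intro poly_mapping_eqI) simp
qed

definition reducible_polys :: "'k mpoly set" where
  "reducible_polys = {Q + r | Q r. Q \<in> rel_ideal \<and> r \<in> reduced_polys}"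

lemma reducible_polys_add:
  assumes "P \<in> reducible_polys" "P' \<in> reducible_polys"
  shows "P + P' \<in> reducible_polys"
proof -
  obtain Q r Q' r' where QR: "Q \<in> rel_ideal" "r \<in> reduced_polys" "Q' \<in> rel_ideal" "r' \<in> reduced_polys"
    and "P = Q + r" "P' = Q' + r'"
    using assms by (auto simp: reducible_polys_def)
  then have "P + P' = (Q + Q') + (r + r')"
    by (simp add: algebra_simps)
  then show ?thesis
    unfolding reducible_polys_def using ideal_gen_add[OF R_subring] reduced_polys_add QR by blast
qed

lemma reducible_polys_zero: "0 \<in> reducible_polys"
  using ideal_gen_zero[OF R_subring] reduced_polys_zero unfolding reducible_polys_def by force

lemma reducible_polys_sum:
  "(\<And>i. i \<in> F \<Longrightarrow> f i \<in> reducible_polys) \<Longrightarrow> sum f F \<in> reducible_polys"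
  by (induction F rule: infinite_finite_induct) (simp_all add: reducible_polys_zero reducible_polys_add)

lemma single_times_power_p:
  "Poly_Mapping.single (m + Poly_Mapping.single i p) c =
     Poly_Mapping.single m c * rel_polys p n A i
     + (\<Sum>j<n. Poly_Mapping.single (m + Poly_Mapping.single j 1) (c * A $$ (j, i)))"
proof -
  have "Poly_Mapping.single (m + Poly_Mapping.single i p) c = Poly_Mapping.single m c * var i ^ p"
    by (simp add: var_power mult_single)
  also have "var i ^ p = rel_polys p n A i + (\<Sum>j<n. const (A $$ (j, i)) * var j)"
    by (simp add: rel_polys_def)
  finally show ?thesis
    by (simp add: distrib_left sum_distrib_left const_mult_var mult_single)
qed

lemma single_in_reducible_polys:
  "c \<in> R \<Longrightarrow> Poly_Mapping.keys m \<subseteq> {..<n} \<Longrightarrow> Poly_Mapping.single m c \<in> reducible_polys"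
proof (induction "\<Sum>i<n. Poly_Mapping.lookup m i" arbitrary: m c rule: less_induct)
  case less
  show ?case
  proof (cases "\<forall>i<n. Poly_Mapping.lookup m i < p")
    case True
    have "Poly_Mapping.lookup m i < p" for i
    proof (cases "i < n")
      case False
      then have "i \<notin> Poly_Mapping.keys m"
        using less.prems(2) by auto
      then show ?thesis
        using p_ge_2 by (simp add: in_keys_iff)
    qed (use True in simp)
    then have "Poly_Mapping.single m c \<in> reduced_polys"
      using polys_over_single[OF R_subring less.prems] by (simp add: reduced_polys_def)
    then show ?thesis
      using ideal_gen_zero[OF R_subring] unfolding reducible_polys_def by force
  next
    case False
    then obtain i where i: "i < n" "p \<le> Poly_Mapping.lookup m i"
      by (auto simp: not_less)
    define m' where "m' = m - Poly_Mapping.single i p"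
    have m: "m = m' + Poly_Mapping.single i p"
      unfolding m'_def using i(2)
      by (intro poly_mapping_eqI) (auto simp: lookup_add lookup_minus lookup_single when_def)
    have "Poly_Mapping.keys m' \<subseteq> Poly_Mapping.keys m"
      unfolding m'_def by (auto simp: in_keys_iff lookup_minus)
    with less.prems(2) have keys_m': "Poly_Mapping.keys m' \<subseteq> {..<n}"
      by blast
    then have keys: "Poly_Mapping.keys (m' + Poly_Mapping.single j 1) \<subseteq> {..<n}" if "j < n" for j
      using keys_add[of m' "Poly_Mapping.single j 1"] that by auto
    have lower: "(\<Sum>k<n. Poly_Mapping.lookup (m' + Poly_Mapping.single j 1) k) < (\<Sum>k<n. Poly_Mapping.lookup m k)"
      if "j < n" for j
      using that i(1) p_ge_2 unfolding m by (simp add: lookup_add lookup_single sum.distrib when_def)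
    have "Poly_Mapping.single m' c * rel_polys p n A i \<in> rel_ideal"
      using less.prems(1) keys_m'
      by (intro ideal_gen_mult_generator[OF R_subring polys_over_single[OF R_subring]] i(1))
    then have "Poly_Mapping.single m' c * rel_polys p n A i \<in> reducible_polys"
      using reduced_polys_zero unfolding reducible_polys_def by force
    moreover have "Poly_Mapping.single (m' + Poly_Mapping.single j 1) (c * A $$ (j, i)) \<in> reducible_polys"
      if "j < n" for j
      using less.hyps[OF lower[OF that] _ keys[OF that]] less.prems(1) A_in_R[OF that i(1)]
        subring_mult[OF R_subring] by blast
    ultimately show ?thesis
      unfolding m single_times_power_p by (auto intro!: reducible_polys_add reducible_polys_sum)
  qed
qed

lemma kernel_eval_u: "{P \<in> polys_over R n. eval_mpoly s u P = 0} = rel_ideal"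
proof
  show "rel_ideal \<subseteq> {P \<in> polys_over R n. eval_mpoly s u P = 0}"
    using rel_ideal_subset_kernel by blast
  show "{P \<in> polys_over R n. eval_mpoly s u P = 0} \<subseteq> rel_ideal"
  proof clarify
    fix P assume P: "P \<in> polys_over R n" "eval_mpoly s u P = 0"
    have "P \<in> reducible_polys"
      using P(1) by (subst poly_mapping_sum_singles)
        (auto simp: mem_polys_over_iff intro!: reducible_polys_sum single_in_reducible_polys)
    then obtain Q r where Qr: "P = Q + r" "Q \<in> rel_ideal" "r \<in> reduced_polys"
      by (auto simp: reducible_polys_def)
    then have "eval_mpoly s u r = 0"
      using P(2) rel_ideal_subset_kernel[OF Qr(2)] by (simp add: alg_map_s eval_mpoly_add)
    then have "r = 0"
      using reduced_poly_eval_eq_0[OF Qr(3)] by blast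
    then show "P \<in> rel_ideal"
      using Qr by simp
  qed
qed

end

section \<open>Comparing the orders attached to \<open>\<Theta>\<close> and \<open>\<Theta> * M\<close>\<close>

context theta_order
begin

lemma H\<^sub>0_change_of_basis_subset:
  assumes M: "M \<in> carrier_mat n n" "entries_in R M"
  shows "gen_alg s R (theta_elems s n (\<Theta> * M) t ` {..<n}) \<subseteq> H\<^sub>0"
proof (rule gen_alg_least)
  show "theta_elems s n (\<Theta> * M) t ` {..<n} \<subseteq> H\<^sub>0"
    using M unfolding entries_in_def
    by (auto simp: theta_elems_mult[OF \<Theta>_carrier M(1)] intro!: H\<^sub>0_sum H\<^sub>0_scale u_in_H\<^sub>0)
qed (auto intro: scalar_in_H\<^sub>0 gen_alg.add gen_alg.mult)

lemma change_of_basis_entries_in_R: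
  assumes M: "M \<in> carrier_mat n n" and in_H\<^sub>0: "\<And>i. i < n \<Longrightarrow> theta_elems s n (\<Theta> * M) t i \<in> H\<^sub>0"
  shows "entries_in R M"
  unfolding entries_in_def
proof (intro allI impI)
  fix k i assume "k < dim_row M" "i < dim_col M"
  then have "k < n" "i < n"
    using M by auto
  then show "M $$ (k, i) \<in> R"
    using u_coords_in_R[OF in_H\<^sub>0 theta_elems_mult[OF \<Theta>_carrier M]] by blast
qed

lemma H\<^sub>0_eq_iff:
  assumes "theta_order s sh shh tp tp3 \<Delta> \<epsilon> S v p n t B A' \<Theta>'"
  shows "H\<^sub>0 = gen_alg s R (theta_elems s n \<Theta>' t ` {..<n}) \<longleftrightarrow> (\<exists>M. GL_over R n M \<and> \<Theta>' = \<Theta> * M)"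
proof -
  interpret \<Theta>': theta_order s sh shh tp tp3 \<Delta> \<epsilon> S v p n t B A' \<Theta>'
    by (rule assms)
  show ?thesis
  proof
    assume eq: "H\<^sub>0 = \<Theta>'.H\<^sub>0"
    obtain N where N: "N \<in> carrier_mat n n" "\<Theta> * N = 1\<^sub>m n" "N * \<Theta> = 1\<^sub>m n"
      using \<Theta>_GL unfolding GL_over_def by blast
    obtain N' where N': "N' \<in> carrier_mat n n" "\<Theta>' * N' = 1\<^sub>m n" "N' * \<Theta>' = 1\<^sub>m n"
      using \<Theta>'.\<Theta>_GL unfolding GL_over_def by blast
    define M where "M = N * \<Theta>'"
    define M' where "M' = N' * \<Theta>"
    have M_carrier: "M \<in> carrier_mat n n" "M' \<in> carrier_mat n n"
      unfolding M_def M'_def using N(1) N'(1) \<Theta>_carrier \<Theta>'.\<Theta>_carrier by auto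
    have \<Theta>_M: "\<Theta> * M = \<Theta>'"
      unfolding M_def using N(1,2) \<Theta>_carrier \<Theta>'.\<Theta>_carrier
      by (simp flip: assoc_mult_mat[OF \<Theta>_carrier N(1) \<Theta>'.\<Theta>_carrier])
    have \<Theta>'_M': "\<Theta>' * M' = \<Theta>"
      unfolding M'_def using N'(1,2) \<Theta>_carrier \<Theta>'.\<Theta>_carrier
      by (simp flip: assoc_mult_mat[OF \<Theta>'.\<Theta>_carrier N'(1) \<Theta>_carrier])
    have "entries_in R M"
      by (rule change_of_basis_entries_in_R[OF M_carrier(1)]) (use eq \<Theta>_M \<Theta>'.u_in_H\<^sub>0 in simp)
    moreover have "entries_in R M'"
      by (rule \<Theta>'.change_of_basis_entries_in_R[OF M_carrier(2)]) (use eq \<Theta>'_M' u_in_H\<^sub>0 in simp)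
    moreover have "M * M' = 1\<^sub>m n"
      using \<Theta>'_M' N(3) unfolding M_def by (simp add: assoc_mult_mat[OF N(1) \<Theta>'.\<Theta>_carrier M_carrier(2)])
    moreover have "M' * M = 1\<^sub>m n"
      using \<Theta>_M N'(3) unfolding M'_def by (simp add: assoc_mult_mat[OF N'(1) \<Theta>_carrier M_carrier(1)])
    ultimately have "GL_over R n M"
      unfolding GL_over_def using M_carrier by blast
    then show "\<exists>M. GL_over R n M \<and> \<Theta>' = \<Theta> * M"
      using \<Theta>_M by metis
  next
    assume "\<exists>M. GL_over R n M \<and> \<Theta>' = \<Theta> * M"
    then obtain M N where M: "M \<in> carrier_mat n n" "entries_in R M" "\<Theta>' = \<Theta> * M"
      and N: "N \<in> carrier_mat n n" "entries_in R N" "M * N = 1\<^sub>m n"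
      unfolding GL_over_def by blast
    have "\<Theta>' * N = \<Theta>"
      using M(1,3) N(1,3) \<Theta>_carrier by (simp add: assoc_mult_mat[OF \<Theta>_carrier M(1) N(1)])
    then have "H\<^sub>0 \<subseteq> \<Theta>'.H\<^sub>0"
      using \<Theta>'.H\<^sub>0_change_of_basis_subset[OF N(1,2)] by simp
    moreover have "\<Theta>'.H\<^sub>0 \<subseteq> H\<^sub>0"
      using H\<^sub>0_change_of_basis_subset[OF M(1,2)] M(3) by simp
    ultimately show "H\<^sub>0 = \<Theta>'.H\<^sub>0"
      by blast
  qed
qed

end

theorem theorem4p2:
  fixes s :: "'k::field \<Rightarrow> 'h::comm_ring_1"
    and sh :: "'k \<Rightarrow> 'hh::comm_ring_1" and shh :: "'k \<Rightarrow> 'hhh::comm_ring_1"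
    and tp :: "'h \<Rightarrow> 'h \<Rightarrow> 'hh" and tp3 :: "'h \<Rightarrow> 'h \<Rightarrow> 'h \<Rightarrow> 'hhh"
    and \<Delta> :: "'h \<Rightarrow> 'hh" and \<epsilon> :: "'h \<Rightarrow> 'k" and S :: "'h \<Rightarrow> 'h"
    and v :: "'k \<Rightarrow> int" and p n :: nat and t :: "nat \<Rightarrow> 'h"
    and B A \<Theta> :: "'k mat"
  defines "R \<equiv> valuation_ring v"
  assumes dvr: "discrete_valuation v"
    and char_p: "prime p" "of_nat p = (0::'k)"
    and hopf: "comm_cocomm_hopf s sh shh tp tp3 \<Delta> \<epsilon> S"
    and rank: "\<exists>e. basis_over s UNIV e {..<p ^ n} (UNIV :: 'h set)"
    and prim_gen: "gen_alg s UNIV (prim tp \<Delta>) = UNIV"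
    and prim_basis: "basis_over s UNIV t {..<n} (prim tp \<Delta>)"
    and B: "B \<in> carrier_mat n n" "entries_in R B"
      "\<forall>i<n. t i ^ p = (\<Sum>j<n. s (B $$ (j, i)) * t j)"
    and A: "A \<in> carrier_mat n n" "entries_in R A"
    and Theta: "GL_over UNIV n \<Theta>" "\<Theta> * A = B * frob_mat p \<Theta>"
  shows
    "(\<forall>i<n. theta_elems s n \<Theta> t i \<in> prim tp \<Delta>)
     \<and> {P \<in> polys_over R n. eval_mpoly s (theta_elems s n \<Theta> t) P = 0}
         = ideal_gen R n (rel_polys p n A)
     \<and> eval_mpoly s (theta_elems s n \<Theta> t) ` polys_over R n
         = gen_alg s R (theta_elems s n \<Theta> t ` {..<n})
     \<and> hopf_order s sh tp \<Delta> \<epsilon> S R (gen_alg s R (theta_elems s n \<Theta> t ` {..<n}))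
     \<and> (\<forall>A' \<Theta>'. A' \<in> carrier_mat n n \<and> entries_in R A' \<and>
           GL_over UNIV n \<Theta>' \<and> \<Theta>' * A' = B * frob_mat p \<Theta>' \<longrightarrow>
           (gen_alg s R (theta_elems s n \<Theta> t ` {..<n})
              = gen_alg s R (theta_elems s n \<Theta>' t ` {..<n})
            \<longleftrightarrow> (\<exists>M. GL_over R n M \<and> \<Theta>' = \<Theta> * M)))"
proof -
  have hopf_locale: "prim_gen_hopf s sh shh tp tp3 \<Delta> \<epsilon> S v p n t B"
    using dvr char_p hopf rank prim_gen prim_basis B(1,3) by unfold_locales auto
  have order_of: "theta_order s sh shh tp tp3 \<Delta> \<epsilon> S v p n t B A' \<Theta>'"
    if "A' \<in> carrier_mat n n" "entries_in R A'" "GL_over UNIV n \<Theta>'" "\<Theta>' * A' = B * frob_mat p \<Theta>'"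
    for A' \<Theta>'
    using hopf_locale that unfolding R_def theta_order_def theta_order_axioms_def by blast
  interpret theta_order s sh shh tp tp3 \<Delta> \<epsilon> S v p n t B A \<Theta>
    by (rule order_of[OF A Theta])
  show ?thesis
    unfolding R_def
    using u_prim kernel_eval_u eval_image hopf_order_H\<^sub>0 H\<^sub>0_eq_iff[OF order_of, unfolded R_def]
    by blast
qed

end
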